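(* In the restricted cut-and-choose setting described in the context (Protocol 1), assume the expected number of test rounds satisfies $N\ge 1$. Let $\varepsilon_H,\varepsilon_D\ge 0$ be such that, for the client input $\psi=|+\rangle\langle+|^{\otimes k}$ and unitary $U=\mathbb{1}_{\mathcal{X}}$, $$F(\rho_H,|+\rangle\langle+|^{\otimes k})\ge 1-\varepsilon_H$$ and, for every $\alpha\in\mathbb{R}$ (with the attack placement fixed as either before or after the delegated unitary), $$\max_{p\in[0,1]}F\big(\rho_D^\alpha,\;p|+\rangle\langle+|^{\otimes k}+(1-p)|\bot\rangle\langle\bot|\big)\ge 1-\varepsilon_D .$$ (These hold in particular whenever the protocol is $\varepsilon_H$-correct and $\varepsilon_D$-secure in the sense of the fidelity-based definition in the context, since the phase attacks are admissible server attacks.) Then $\varepsilon_H+\varepsilon_D\ge \frac{1}{7N}$.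
   Context: Restricted cut-and-choose setting. Fix $k\ge 1$, $\mathcal{X}=\mathbb{C}^{2^k}$, $P(\alpha)=\mathrm{diag}(1,e^{i\alpha})$, $A_\alpha=\mathbb{1}_2^{\otimes(k-1)}\otimes P(\alpha)$, $|+\rangle=(|0\rangle+|1\rangle)/\sqrt2$, $|+_\alpha\rangle=(|0\rangle+e^{i\alpha}|1\rangle)/\sqrt2$. Let $\Omega$ be a probability distribution on $\mathbb{N}=\{0,1,\dots\}$ (number $n$ of test rounds) with finite mean $N=\sum_n n\Omega(n)$. For each $n$ and $i\in\{1,\dots,n+1\}$ there are a test unitary $T_{n,i}\in\mathrm{U}(\mathcal{X})$ and a test input unit vector $|\chi_{n,i}\rangle\in\mathcal{X}$, and for each $n$ an operator $0\le\mu_{k,n}\le\mathbb{1}$ on $\mathcal{X}^{\otimes n}$ (accept outcome). The output round $\ell$ is uniform on $\{1,\dots,n+1\}$, rounds $i\neq\ell$ are test rounds; after all rounds the client measures the $n$ test outputs with $\{\mu_{k,n},\mathbb{1}-\mu_{k,n}\}$, outputs the computation-round output on acceptance and $|\bot\rangle$ otherwise, where $|\bot\rangle$ is a unit vector orthogonal to $\mathcal{X}$ (states live on $\mathcal{X}\oplus\mathbb{C}|\bot\rangle$). The phase attack with parameter $\alpha$ replaces every delegated unitary $T$ by $T^\alpha=TA_\alpha$ (for all rounds) or by $T^\alpha=A_\alpha T$ (for all rounds). Define $p^H_{n,\ell}=\mathrm{Tr}[\mu_{k,n}\bigotimes_{i\ne\ell}T_{n,i}|\chi_{n,i}\rangle\langle\chi_{n,i}|T_{n,i}^\dagger]$,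 $p^D_{n,\ell}$ the same with $T_{n,i}$ replaced by $T^\alpha_{n,i}$, $p_H=\sum_n\frac{\Omega(n)}{n+1}\sum_{\ell=1}^{n+1}p^H_{n,\ell}$, $p^\alpha_D=\sum_n\frac{\Omega(n)}{n+1}\sum_{\ell=1}^{n+1}p^D_{n,\ell}$. For input $|+\rangle\langle+|^{\otimes k}$ and $U=\mathbb{1}$, the client's output states are $\rho_H=p_H|+\rangle\langle+|^{\otimes k}+(1-p_H)|\bot\rangle\langle\bot|$ (honest server) and $\rho^\alpha_D=p^\alpha_D|+\rangle\langle+|^{\otimes (k-1)}\otimes|+_\alpha\rangle\langle+_\alpha|+(1-p^\alpha_D)|\bot\rangle\langle\bot|$ (phase attack). Fidelity: $F(\rho,\sigma)=\big(\mathrm{Tr}\sqrt{\sqrt\rho\,\sigma\sqrt\rho}\big)^2$. Fidelity-based definition: a protocol is $\varepsilon_H$-correct and $\varepsilon_D$-secure if for every input $\psi$ and unitary $U$, the honest output $\rho_H$ satisfies $F(\rho_H,U\psi U^\dagger)\ge1-\varepsilon_H$, and for every server attack the output $\rho_D$ satisfies $\max_{p\in[0,1]}F(\rho_D,pU\psi U^\dagger+(1-p)|\bot\rangle\langle\bot|)\ge1-\varepsilon_D$. *)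

theory Defs
  imports Complex_Main "Jordan_Normal_Form.Matrix"
begin

definition dag :: "complex mat \<Rightarrow> complex mat" where
  "dag A = mat (dim_col A) (dim_row A) (\<lambda>(i,j). cnj (A $$ (j,i)))"

definition mtrace :: "complex mat \<Rightarrow> complex" where
  "mtrace A = (\<Sum>i<dim_row A. A $$ (i,i))"

definition cinner :: "complex vec \<Rightarrow> complex vec \<Rightarrow> complex" where
  "cinner v w = (\<Sum>i<dim_vec v. cnj (v $ i) * w $ i)"

definition is_unitary :: "nat \<Rightarrow> complex mat \<Rightarrow> bool" where
  "is_unitary d U \<longleftrightarrow> U \<in> carrier_mat d d \<and> dag U * U = 1\<^sub>m d \<and> U * dag U = 1\<^sub>m d"

definition is_unit_vec :: "nat \<Rightarrow> complex vec \<Rightarrow> bool" where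
  "is_unit_vec d v \<longleftrightarrow> v \<in> carrier_vec d \<and> cinner v v = 1"

definition psd :: "nat \<Rightarrow> complex mat \<Rightarrow> bool" where
  "psd d A \<longleftrightarrow> A \<in> carrier_mat d d \<and> dag A = A \<and>
     (\<forall>v \<in> carrier_vec d. Im (cinner v (A *\<^sub>v v)) = 0 \<and> Re (cinner v (A *\<^sub>v v)) \<ge> 0)"

definition effect :: "nat \<Rightarrow> complex mat \<Rightarrow> bool" where
  "effect d M \<longleftrightarrow> psd d M \<and> psd d (1\<^sub>m d - M)"

definition sqrtm :: "complex mat \<Rightarrow> complex mat" where
  "sqrtm A = (THE B. psd (dim_row A) B \<and> B * B = A)"

definition fidelity :: "complex mat \<Rightarrow> complex mat \<Rightarrow> real" where
  "fidelity \<rho> \<sigma> = (Re (mtrace (sqrtm (sqrtm \<rho> * \<sigma> * sqrtm \<rho>))))\<^sup>2"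

definition ketbra :: "complex vec \<Rightarrow> complex mat" where
  "ketbra v = mat (dim_vec v) (dim_vec v) (\<lambda>(i,j). v $ i * cnj (v $ j))"

text \<open>Kronecker (tensor) product; index i of A \<otimes> B is (i div dim B, i mod dim B)\<close>
definition kron :: "complex mat \<Rightarrow> complex mat \<Rightarrow> complex mat" where
  "kron A B = mat (dim_row A * dim_row B) (dim_col A * dim_col B)
     (\<lambda>(i,j). A $$ (i div dim_row B, j div dim_col B) * B $$ (i mod dim_row B, j mod dim_col B))"

definition kron_list :: "complex mat list \<Rightarrow> complex mat" where
  "kron_list As = foldr kron As (1\<^sub>m 1)"

definition Pgate :: "real \<Rightarrow> complex mat" where
  "Pgate \<alpha> = mat 2 2 (\<lambda>(i,j). if i = j then (if i = 0 then 1 else cis \<alpha>) else 0)"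

definition Aphase :: "nat \<Rightarrow> real \<Rightarrow> complex mat" where
  "Aphase k \<alpha> = kron (1\<^sub>m (2^(k-1))) (Pgate \<alpha>)"

definition plus_a :: "real \<Rightarrow> complex vec" where
  "plus_a \<alpha> = vec 2 (\<lambda>i. if i = 0 then 1 / sqrt 2 else cis \<alpha> / sqrt 2)"

definition plus_k :: "nat \<Rightarrow> complex mat" where
  "plus_k k = kron_list (replicate k (ketbra (plus_a 0)))"

definition plus_k_alpha :: "nat \<Rightarrow> real \<Rightarrow> complex mat" where
  "plus_k_alpha k \<alpha> = kron (kron_list (replicate (k-1) (ketbra (plus_a 0)))) (ketbra (plus_a \<alpha>))"

text \<open>States on X \<oplus> C|bot>, dim X = 2^k; |bot> is the last basis vector (index 2^k).
  ext_state k \<rho> embeds an operator on X as the upper-left block.\<close>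
definition ext_state :: "nat \<Rightarrow> complex mat \<Rightarrow> complex mat" where
  "ext_state k \<rho> = mat (2^k + 1) (2^k + 1)
     (\<lambda>(i,j). if i < 2^k \<and> j < 2^k then \<rho> $$ (i,j) else 0)"

definition bot_state :: "nat \<Rightarrow> complex mat" where
  "bot_state k = ketbra (unit_vec (2^k + 1) (2^k))"

definition mix_bot :: "nat \<Rightarrow> real \<Rightarrow> complex mat \<Rightarrow> complex mat" where
  "mix_bot k p \<rho> = complex_of_real p \<cdot>\<^sub>m ext_state k \<rho> + complex_of_real (1 - p) \<cdot>\<^sub>m bot_state k"

definition accept_prob ::
  "complex mat \<Rightarrow> (nat \<Rightarrow> complex mat) \<Rightarrow> (nat \<Rightarrow> complex vec) \<Rightarrow> nat \<Rightarrow> nat \<Rightarrow> real" where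
  "accept_prob \<mu> T \<chi> n l = Re (mtrace (\<mu> * kron_list
      (map (\<lambda>i. T i * ketbra (\<chi> i) * dag (T i)) (filter (\<lambda>i. i \<noteq> l) [1..<n+2]))))"

definition avg_accept ::
  "(nat \<Rightarrow> real) \<Rightarrow> (nat \<Rightarrow> complex mat) \<Rightarrow> (nat \<Rightarrow> nat \<Rightarrow> complex mat) \<Rightarrow> (nat \<Rightarrow> nat \<Rightarrow> complex vec) \<Rightarrow> real" where
  "avg_accept \<Omega> \<mu> T \<chi> = (\<Sum>n. \<Omega> n / real (n+1) * (\<Sum>l\<in>{1..n+1}. accept_prob (\<mu> n) (T n) (\<chi> n) n l))"

definition attacked :: "nat \<Rightarrow> bool \<Rightarrow> real \<Rightarrow> complex mat \<Rightarrow> complex mat" where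
  "attacked k before \<alpha> T = (if before then T * Aphase k \<alpha> else Aphase k \<alpha> * T)"

end

theory Submission
  imports Defs
begin

(* Both output states have the form q |x><x| + (1 - q) |bot><bot| with x orthogonal to |bot>, and
  the fidelity of two such states is (sqrt (q p) |<x|y>| + sqrt ((1 - q) (1 - p)))^2.  Hence the
  honest fidelity equals p_H, while under the phase attack with cos(alpha/2) = c the fidelity is
  at most 1 - p_D (1 - c^2), whatever p the client compares with.

  On a single test round the attack moves the test output by overlap at least c, so on the n test
  rounds jointly by overlap at least c^n >= 1 - n (1 - c).  For an effect mu and unit vectors P, F
  one has 1 - <F|mu|F> <= 4 (1 - <P|mu|P>) + 8/3 (1 - |<P|F>|), and averaging over n and the
  output round gives p_D >= 4 p_H - 3 - 8/3 (1 - c) N.  With 1 - c = 3/(20 N) these two estimates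
  force eps_H + eps_D >= 1/(7 N). *)

lemma mult_mat_vec_nth:
  "A \<in> carrier_mat m n \<Longrightarrow> v \<in> carrier_vec n \<Longrightarrow> i < m \<Longrightarrow> (A *\<^sub>v v) $ i = (\<Sum>j<n. A $$ (i,j) * v $ j)"
  by (auto simp: scalar_prod_def atLeast0LessThan intro!: sum.cong)

lemma cinner_add_right:
  "a \<in> carrier_vec n \<Longrightarrow> b \<in> carrier_vec n \<Longrightarrow> c \<in> carrier_vec n \<Longrightarrow>
   cinner a (b + c) = cinner a b + cinner a c"
  unfolding cinner_def by (auto simp: sum.distrib ring_distribs)

lemma cinner_add_left:
  "a \<in> carrier_vec n \<Longrightarrow> b \<in> carrier_vec n \<Longrightarrow> c \<in> carrier_vec n \<Longrightarrow>
   cinner (a + b) c = cinner a c + cinner b c"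
  unfolding cinner_def by (auto simp: sum.distrib ring_distribs)

lemma cinner_diff_right:
  "a \<in> carrier_vec n \<Longrightarrow> b \<in> carrier_vec n \<Longrightarrow> c \<in> carrier_vec n \<Longrightarrow>
   cinner a (b - c) = cinner a b - cinner a c"
  unfolding cinner_def by (auto simp: sum_subtractf ring_distribs)

lemma cinner_diff_left:
  "a \<in> carrier_vec n \<Longrightarrow> b \<in> carrier_vec n \<Longrightarrow> c \<in> carrier_vec n \<Longrightarrow>
   cinner (a - b) c = cinner a c - cinner b c"
  unfolding cinner_def by (auto simp: sum_subtractf ring_distribs)

lemma cinner_smult_right:
  "a \<in> carrier_vec n \<Longrightarrow> b \<in> carrier_vec n \<Longrightarrow> cinner a (s \<cdot>\<^sub>v b) = s * cinner a b"
  unfolding cinner_def by (auto simp: sum_distrib_left algebra_simps)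

lemma cinner_smult_left:
  "a \<in> carrier_vec n \<Longrightarrow> b \<in> carrier_vec n \<Longrightarrow> cinner (s \<cdot>\<^sub>v a) b = cnj s * cinner a b"
  unfolding cinner_def by (auto simp: sum_distrib_left algebra_simps)

lemma cinner_commute:
  "a \<in> carrier_vec n \<Longrightarrow> b \<in> carrier_vec n \<Longrightarrow> cinner b a = cnj (cinner a b)"
  unfolding cinner_def by (auto simp: mult.commute)

lemma mult_cnj_eq_cmod_square: "z * cnj z = complex_of_real ((cmod z)\<^sup>2)"
  using complex_norm_square[of z] by simp

lemma cinner_self: "cinner a a = complex_of_real (\<Sum>i<dim_vec a. (cmod (a $ i))\<^sup>2)"
  unfolding cinner_def of_real_sum complex_norm_square by (simp add: mult.commute)

lemma cinner_self_nonneg: "Re (cinner a a) \<ge> 0" "Im (cinner a a) = 0"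
  by (auto simp: cinner_self intro: sum_nonneg)

lemma cinner_self_eq_0: assumes "cinner a a = 0" shows "a = 0\<^sub>v (dim_vec a)"
proof -
  have "(\<Sum>i<dim_vec a. (cmod (a $ i))\<^sup>2) = 0" using assms by (simp only: cinner_self of_real_eq_0_iff)
  then have "\<forall>i\<in>{..<dim_vec a}. (cmod (a $ i))\<^sup>2 = 0"
    by (subst sum_nonneg_eq_0_iff[symmetric]) auto
  then show ?thesis by (auto intro!: eq_vecI)
qed

lemma dag_carrier: "A \<in> carrier_mat m n \<Longrightarrow> dag A \<in> carrier_mat n m"
  by (auto simp: dag_def)

lemma dag_dag: "A \<in> carrier_mat m n \<Longrightarrow> dag (dag A) = A"
  by (rule eq_matI) (auto simp: dag_def)

lemma cinner_mult_mat_vec_dag: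
  assumes "M \<in> carrier_mat m m" "v \<in> carrier_vec m" "w \<in> carrier_vec m"
  shows "cinner v (M *\<^sub>v w) = cinner (dag M *\<^sub>v v) w"
proof -
  have dM: "dag M \<in> carrier_mat m m" using assms(1) by (rule dag_carrier)
  have "cinner v (M *\<^sub>v w) = (\<Sum>i<m. \<Sum>j<m. cnj (v$i) * M $$ (i,j) * w $ j)"
    unfolding cinner_def using assms
    by (auto simp: mult_mat_vec_nth sum_distrib_left mult.assoc simp del: index_mult_mat_vec
        intro!: sum.cong)
  also have "\<dots> = (\<Sum>j<m. \<Sum>i<m. cnj (v$i) * M $$ (i,j) * w $ j)" by (rule sum.swap)
  also have "\<dots> = cinner (dag M *\<^sub>v v) w"
  proof -
    have "\<And>j. j < m \<Longrightarrow> (dag M *\<^sub>v v) $ j = (\<Sum>i<m. cnj (M $$ (i,j)) * v $ i)"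
      using mult_mat_vec_nth[OF dM assms(2)] assms by (simp add: dag_def)
    then show ?thesis unfolding cinner_def using assms dM
      by (auto simp: sum_distrib_right sum_distrib_left mult.commute mult.left_commute
          simp del: index_mult_mat_vec intro!: sum.cong)
  qed
  finally show ?thesis .
qed

lemma is_unitary_cinner:
  assumes U: "is_unitary d U" and a: "a \<in> carrier_vec d" and b: "b \<in> carrier_vec d"
  shows "cinner (U *\<^sub>v a) (U *\<^sub>v b) = cinner a b"
proof -
  have Uc: "U \<in> carrier_mat d d" and UU: "dag U * U = 1\<^sub>m d" using U by (auto simp: is_unitary_def)
  have "cinner (U *\<^sub>v a) (U *\<^sub>v b) = cinner a (dag U *\<^sub>v (U *\<^sub>v b))"
    using cinner_mult_mat_vec_dag[OF dag_carrier[OF Uc] a, of "U *\<^sub>v b"] dag_dag[OF Uc] Uc b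
    by simp
  also have "\<dots> = cinner a b"
    using Uc b UU dag_carrier[OF Uc] by (simp add: assoc_mult_mat_vec[symmetric, of _ d d _ d])
  finally show ?thesis .
qed

lemma eq_mat_by_mult_vec:
  fixes A B :: "complex mat"
  assumes "A \<in> carrier_mat m m" "B \<in> carrier_mat m m"
    and "\<And>v. v \<in> carrier_vec m \<Longrightarrow> A *\<^sub>v v = B *\<^sub>v v"
  shows "A = B"
proof (rule eq_matI)
  fix i j assume ij: "i < dim_row B" "j < dim_col B"
  have "(A *\<^sub>v unit_vec m j) $ i = (B *\<^sub>v unit_vec m j) $ i" using assms(3) by simp
  then show "A $$ (i, j) = B $$ (i, j)" using ij assms(1,2) by (simp add: scalar_prod_right_unit)
qed (use assms in auto)

lemma smult_mat_mult_vec: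
  "A \<in> carrier_mat m n \<Longrightarrow> v \<in> carrier_vec n \<Longrightarrow> (c \<cdot>\<^sub>m A) *\<^sub>v v = c \<cdot>\<^sub>v (A *\<^sub>v v)"
  by (rule eq_vecI) (auto simp: scalar_prod_def sum_distrib_left mult.assoc)

lemma of_real_sqrt_mult_self:
  "a \<ge> 0 \<Longrightarrow> complex_of_real (sqrt a) * (complex_of_real (sqrt a) * z) = complex_of_real a * z"
  by (simp add: mult.assoc[symmetric] flip: of_real_mult)

lemma ketbra_carrier: "x \<in> carrier_vec n \<Longrightarrow> ketbra x \<in> carrier_mat n n"
  by (auto simp: ketbra_def)

lemma ketbra_mult_vec:
  "x \<in> carrier_vec n \<Longrightarrow> u \<in> carrier_vec n \<Longrightarrow> ketbra x *\<^sub>v u = cinner x u \<cdot>\<^sub>v x"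
  by (intro eq_vecI)
    (auto simp: ketbra_def scalar_prod_def cinner_def sum_distrib_left mult.assoc mult.commute
      mult.left_commute atLeast0LessThan)

lemma mult_ketbra_dag:
  assumes T: "T \<in> carrier_mat d d" and x: "x \<in> carrier_vec d"
  shows "T * ketbra x * dag T = ketbra (T *\<^sub>v x)"
proof (rule eq_mat_by_mult_vec[of _ d])
  fix u :: "complex vec" assume u: "u \<in> carrier_vec d"
  have dT: "dag T \<in> carrier_mat d d" using dag_carrier[OF T] .
  have "T * ketbra x * dag T *\<^sub>v u = T *\<^sub>v (ketbra x *\<^sub>v (dag T *\<^sub>v u))"
    using T dT ketbra_carrier[OF x] u by (simp add: assoc_mult_mat_vec[of _ d d _ d])
  also have "\<dots> = cinner (T *\<^sub>v x) u \<cdot>\<^sub>v (T *\<^sub>v x)"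
    using ketbra_mult_vec[OF x] cinner_mult_mat_vec_dag[OF dT x u] dag_dag[OF T] T x dT u
    by (simp add: mult_mat_vec)
  also have "\<dots> = ketbra (T *\<^sub>v x) *\<^sub>v u"
    using ketbra_mult_vec[of "T *\<^sub>v x" d u] T x u by simp
  finally show "T * ketbra x * dag T *\<^sub>v u = ketbra (T *\<^sub>v x) *\<^sub>v u" .
qed (use T x in \<open>auto simp: ketbra_def dag_def\<close>)

definition qform :: "complex mat \<Rightarrow> complex vec \<Rightarrow> complex" where
  "qform M v = cinner v (M *\<^sub>v v)"

lemma mtrace_mult_ketbra:
  assumes M: "M \<in> carrier_mat m m" and v: "v \<in> carrier_vec m"
  shows "mtrace (M * ketbra v) = qform M v"
proof -
  have "mtrace (M * ketbra v) = (\<Sum>i<m. \<Sum>j<m. M $$ (i,j) * (v $ j * cnj (v $ i)))"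
    unfolding mtrace_def using M v
    by (auto simp: scalar_prod_def ketbra_def atLeast0LessThan intro!: sum.cong)
  also have "\<dots> = qform M v"
    unfolding qform_def cinner_def using M v
    by (auto simp: mult_mat_vec_nth[OF M v] sum_distrib_left mult.commute mult.left_commute
        simp del: index_mult_mat_vec intro!: sum.cong)
  finally show ?thesis .
qed

lemma qform_smult: "M \<in> carrier_mat n n \<Longrightarrow> v \<in> carrier_vec n \<Longrightarrow> qform M (w \<cdot>\<^sub>v v) = cnj w * w * qform M v"
  unfolding qform_def by (simp add: mult_mat_vec cinner_smult_left[of _ n] cinner_smult_right[of _ n])

lemma qform_one_minus:
  assumes M: "M \<in> carrier_mat n n" and v: "v \<in> carrier_vec n"
  shows "qform (1\<^sub>m n - M) v = cinner v v - qform M v"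
  unfolding qform_def using minus_mult_distrib_mat_vec[OF one_carrier_mat M v] M v
  by (simp add: cinner_diff_right[of _ n])

lemma qform_real_lincomb:
  assumes M: "M \<in> carrier_mat n n" "dag M = M" and a: "a \<in> carrier_vec n" and b: "b \<in> carrier_vec n"
  shows "Re (qform M (complex_of_real s \<cdot>\<^sub>v a + complex_of_real t \<cdot>\<^sub>v b)) =
     s\<^sup>2 * Re (qform M a) + t\<^sup>2 * Re (qform M b) + 2 * s * t * Re (cinner a (M *\<^sub>v b))"
proof -
  have ba: "cinner b (M *\<^sub>v a) = cnj (cinner a (M *\<^sub>v b))"
    using cinner_mult_mat_vec_dag[OF M(1) b a] M cinner_commute[OF a, of "M *\<^sub>v b"] b by simp
  have "qform M (complex_of_real s \<cdot>\<^sub>v a + complex_of_real t \<cdot>\<^sub>v b) =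
     complex_of_real (s*s) * qform M a + complex_of_real (t*t) * qform M b +
     complex_of_real (s*t) * (cinner a (M *\<^sub>v b) + cinner b (M *\<^sub>v a))"
    unfolding qform_def using M a b
    by (simp add: mult_add_distrib_mat_vec[of _ n n] mult_mat_vec cinner_add_left[of _ n]
        cinner_add_right[of _ n] cinner_smult_left[of _ n] cinner_smult_right[of _ n] algebra_simps)
  then show ?thesis unfolding ba by (simp add: power2_eq_square)
qed

text \<open>The cross term is controlled by positivity of the form at \<open>3 a - b\<close>.\<close>

lemma psd_qform_add_le:
  assumes M: "psd n M" and a: "a \<in> carrier_vec n" and b: "b \<in> carrier_vec n"
  shows "Re (qform M (a + b)) \<le> 4 * Re (qform M a) + 4/3 * Re (qform M b)"
proof -
  have Mc: "M \<in> carrier_mat n n" "dag M = M" using M by (auto simp: psd_def)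
  have "a + b = complex_of_real 1 \<cdot>\<^sub>v a + complex_of_real 1 \<cdot>\<^sub>v b" using a b by (intro eq_vecI) auto
  then have sum: "Re (qform M (a + b)) = Re (qform M a) + Re (qform M b) + 2 * Re (cinner a (M *\<^sub>v b))"
    using qform_real_lincomb[OF Mc a b, of 1 1] by simp
  have "Re (qform M (complex_of_real 3 \<cdot>\<^sub>v a + complex_of_real (-1) \<cdot>\<^sub>v b)) \<ge> 0"
    using M a b by (auto simp: psd_def qform_def)
  then have "9 * Re (qform M a) + Re (qform M b) - 6 * Re (cinner a (M *\<^sub>v b)) \<ge> 0"
    unfolding qform_real_lincomb[OF Mc a b] by simp
  with sum show ?thesis by linarith
qed

lemma effect_qform_bounds:
  assumes eff: "effect n \<mu>" and F: "F \<in> carrier_vec n" and FF: "cinner F F = 1"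
  shows "0 \<le> Re (qform \<mu> F)" "Re (qform \<mu> F) \<le> 1"
proof -
  have mu: "psd n \<mu>" and Mp: "psd n (1\<^sub>m n - \<mu>)" using eff by (auto simp: effect_def)
  then show "0 \<le> Re (qform \<mu> F)" using F by (auto simp: psd_def qform_def)
  have "0 \<le> Re (qform (1\<^sub>m n - \<mu>) F)" using Mp F by (auto simp: psd_def qform_def)
  then show "Re (qform \<mu> F) \<le> 1" using mu F FF by (simp add: psd_def qform_one_minus)
qed

lemma exists_phase_cinner_cmod:
  assumes P: "P \<in> carrier_vec n" and F: "F \<in> carrier_vec n"
  obtains w where "cnj w * w = 1" "cinner P (w \<cdot>\<^sub>v F) = complex_of_real (cmod (cinner P F))"
proof -
  define z where "z = cinner P F"
  define w where "w = (if z = 0 then 1 else cnj z / complex_of_real (cmod z))"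
  have zz: "z * cnj z = complex_of_real (cmod z) * complex_of_real (cmod z)"
    by (simp flip: complex_norm_square of_real_mult add: power2_eq_square)
  have "cnj w * w = 1"
    by (cases "z = 0") (simp_all add: w_def zz flip: mult.assoc)
  moreover have "w * z = complex_of_real (cmod z)"
    by (cases "z = 0") (simp_all add: w_def zz mult.commute)
  ultimately show ?thesis using that P F by (simp add: z_def cinner_smult_right[of _ n])
qed

text \<open>After aligning the phase of \<open>F\<close> with \<open>P\<close>, the difference \<open>D = F - P\<close> has
  \<open>\<parallel>D\<parallel>\<^sup>2 = 2 - 2 |\<langle>P|F\<rangle>|\<close>; then use \<open>psd_qform_add_le\<close> for \<open>1 - \<mu>\<close>.\<close>

lemma effect_qform_perturb:
  assumes eff: "effect n \<mu>" and P: "P \<in> carrier_vec n" and F: "F \<in> carrier_vec n"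
    and PP: "cinner P P = 1" and FF: "cinner F F = 1"
  shows "1 - Re (qform \<mu> F) \<le> 4 * (1 - Re (qform \<mu> P)) + 8/3 * (1 - cmod (cinner P F))"
proof -
  define M where "M = 1\<^sub>m n - \<mu>"
  have mu: "psd n \<mu>" and Mp: "psd n M" using eff by (auto simp: effect_def M_def)
  have muc: "\<mu> \<in> carrier_mat n n" using mu by (auto simp: psd_def)
  obtain w where ww: "cnj w * w = 1" and PF': "cinner P (w \<cdot>\<^sub>v F) = complex_of_real (cmod (cinner P F))"
    using exists_phase_cinner_cmod[OF P F] .
  define F' where "F' = w \<cdot>\<^sub>v F"
  have F'c: "F' \<in> carrier_vec n" using F by (simp add: F'_def)
  have F'F': "cinner F' F' = 1" unfolding F'_def using F FF ww
    by (simp add: cinner_smult_left[of _ n] cinner_smult_right[of _ n] mult.assoc[symmetric] mult.commute[of w])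
  have F'P: "cinner F' P = complex_of_real (cmod (cinner P F))"
    using cinner_commute[OF P F'c] PF' by (simp add: F'_def)
  define D where "D = F' - P"
  have Dc: "D \<in> carrier_vec n" using F'c P by (simp add: D_def)
  have "F' = P + D" unfolding D_def using F'c P by (intro eq_vecI) auto
  then have "Re (qform M F') \<le> 4 * Re (qform M P) + 4/3 * Re (qform M D)"
    using psd_qform_add_le[OF Mp P Dc] by simp
  moreover have "Re (qform M F') = 1 - Re (qform \<mu> F)"
    using qform_one_minus[OF muc F'c] qform_smult[OF muc F] F'F' ww by (simp add: M_def F'_def)
  moreover have "Re (qform M P) = 1 - Re (qform \<mu> P)"
    unfolding M_def qform_one_minus[OF muc P] PP by simp
  moreover have "Re (qform M D) \<le> 2 - 2 * cmod (cinner P F)"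
  proof -
    have "cinner D D = cinner F' F' - cinner F' P - cinner P F' + cinner P P"
      unfolding D_def using F'c P by (simp add: cinner_diff_left[of _ n] cinner_diff_right[of _ n])
    then have "Re (cinner D D) = 2 - 2 * cmod (cinner P F)"
      unfolding F'F' PP F'P PF'[folded F'_def] by simp
    moreover have "Re (qform \<mu> D) \<ge> 0" using mu Dc by (auto simp: psd_def qform_def)
    ultimately show ?thesis unfolding M_def qform_one_minus[OF muc Dc] by simp
  qed
  ultimately show ?thesis by argo
qed

section \<open>Square roots and fidelity of rank-two states\<close>

lemma psd_sqrt_eigenvector:
  assumes B: "psd m B" and BB: "B * B = A" and x: "x \<in> carrier_vec m"
    and Ax: "A *\<^sub>v x = complex_of_real a \<cdot>\<^sub>v x" and a: "a \<ge> 0"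
  shows "B *\<^sub>v x = complex_of_real (sqrt a) \<cdot>\<^sub>v x"
proof -
  have Bc: "B \<in> carrier_mat m m" and dB: "dag B = B" using B by (auto simp: psd_def)
  have BBx: "B *\<^sub>v (B *\<^sub>v x) = complex_of_real a \<cdot>\<^sub>v x"
    using Ax BB Bc x by (simp add: assoc_mult_mat_vec[symmetric])
  have Bxc: "B *\<^sub>v x \<in> carrier_vec m" using Bc x by simp
  show ?thesis
  proof (cases "a = 0")
    case True
    have "cinner (B *\<^sub>v x) (B *\<^sub>v x) = cinner x (B *\<^sub>v (B *\<^sub>v x))"
      using cinner_mult_mat_vec_dag[OF Bc x Bxc] dB by simp
    also have "\<dots> = 0" using BBx True x by (simp add: cinner_def)
    finally have "B *\<^sub>v x = 0\<^sub>v m" using cinner_self_eq_0 Bc by fastforce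
    then show ?thesis using True x by (auto intro!: eq_vecI)
  next
    case False
    define s where "s = sqrt a"
    have s: "s > 0" using a False by (auto simp: s_def)
    define r where "r = B *\<^sub>v x - complex_of_real s \<cdot>\<^sub>v x"
    have rc: "r \<in> carrier_vec m" using Bc x by (simp add: r_def)
    have "B *\<^sub>v r = B *\<^sub>v (B *\<^sub>v x) - complex_of_real s \<cdot>\<^sub>v (B *\<^sub>v x)"
      unfolding r_def using Bc x by (simp add: mult_minus_distrib_mat_vec mult_mat_vec)
    also have "\<dots> = - (complex_of_real s \<cdot>\<^sub>v r)"
      unfolding BBx r_def using Bc x a
      by (intro eq_vecI) (auto simp: s_def algebra_simps simp flip: of_real_mult)
    finally have "qform B r = - (complex_of_real s * cinner r r)"
      using rc by (simp add: qform_def cinner_def sum_negf sum_distrib_left algebra_simps)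
    moreover have "Re (qform B r) \<ge> 0" using B rc by (auto simp: psd_def qform_def)
    ultimately have "s * Re (cinner r r) \<le> 0" by simp
    then have "cinner r r = 0"
      using s cinner_self_nonneg[of r] by (simp add: complex_eq_iff mult_le_0_iff)
    then have "r = 0\<^sub>v m" using cinner_self_eq_0 rc by fastforce
    then have "\<And>i. i < m \<Longrightarrow> r $ i = 0" by simp
    then show ?thesis unfolding s_def[symmetric] using Bc x
      by (intro eq_vecI) (auto simp: r_def)
  qed
qed

definition ketbra2 :: "real \<Rightarrow> complex vec \<Rightarrow> real \<Rightarrow> complex vec \<Rightarrow> complex mat" where
  "ketbra2 a x b y = complex_of_real a \<cdot>\<^sub>m ketbra x + complex_of_real b \<cdot>\<^sub>m ketbra y"

lemma ketbra2_carrier: "x \<in> carrier_vec m \<Longrightarrow> y \<in> carrier_vec m \<Longrightarrow> ketbra2 a x b y \<in> carrier_mat m m"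
  by (auto simp: ketbra2_def ketbra_def)

lemma ketbra2_mult_vec:
  assumes "x \<in> carrier_vec m" "y \<in> carrier_vec m" "u \<in> carrier_vec m"
  shows "ketbra2 a x b y *\<^sub>v u =
    (complex_of_real a * cinner x u) \<cdot>\<^sub>v x + (complex_of_real b * cinner y u) \<cdot>\<^sub>v y"
  using assms unfolding ketbra2_def
  by (subst add_mult_distrib_mat_vec[of _ m m])
    (auto simp: ketbra_carrier smult_mat_mult_vec[of _ m m] ketbra_mult_vec[of _ m] smult_smult_assoc)

lemma dag_ketbra2: "x \<in> carrier_vec m \<Longrightarrow> y \<in> carrier_vec m \<Longrightarrow> dag (ketbra2 a x b y) = ketbra2 a x b y"
  by (rule eq_matI) (auto simp: ketbra2_def dag_def ketbra_def)

lemma psd_ketbra2: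
  assumes x: "x \<in> carrier_vec m" and y: "y \<in> carrier_vec m" and "a \<ge> 0" "b \<ge> 0"
  shows "psd m (ketbra2 a x b y)"
proof -
  have "cinner u (ketbra2 a x b y *\<^sub>v u) =
      complex_of_real a * (cinner x u * cinner u x) + complex_of_real b * (cinner y u * cinner u y)"
    if u: "u \<in> carrier_vec m" for u
    using x y u
    by (simp add: ketbra2_mult_vec cinner_add_right[of _ m] cinner_smult_right[of _ m] algebra_simps)
  also have "\<dots> u = complex_of_real (a * (cmod (cinner x u))\<^sup>2 + b * (cmod (cinner y u))\<^sup>2)"
    if u: "u \<in> carrier_vec m" for u
    using x y u by (simp add: cinner_commute[of x m u] cinner_commute[of y m u] mult_cnj_eq_cmod_square)
  finally show ?thesis
    unfolding psd_def using assms by (auto simp: ketbra2_carrier dag_ketbra2)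
qed

lemma mtrace_ketbra2:
  "x \<in> carrier_vec m \<Longrightarrow> y \<in> carrier_vec m \<Longrightarrow>
   mtrace (ketbra2 a x b y) = complex_of_real a * cinner x x + complex_of_real b * cinner y y"
  unfolding mtrace_def ketbra2_def cinner_def
  by (auto simp: ketbra_def sum.distrib sum_distrib_left mult.commute mult.left_commute)

lemma ketbra2_eigenvectors:
  assumes x: "x \<in> carrier_vec m" and y: "y \<in> carrier_vec m"
    and xx: "cinner x x = 1" and yy: "cinner y y = 1" and xy: "cinner x y = 0"
  shows "ketbra2 a x b y *\<^sub>v x = complex_of_real a \<cdot>\<^sub>v x"
    and "ketbra2 a x b y *\<^sub>v y = complex_of_real b \<cdot>\<^sub>v y"
    and "\<And>u. u \<in> carrier_vec m \<Longrightarrow> cinner x u = 0 \<Longrightarrow> cinner y u = 0 \<Longrightarrow>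
      ketbra2 a x b y *\<^sub>v u = complex_of_real 0 \<cdot>\<^sub>v u"
proof -
  have yx: "cinner y x = 0" using cinner_commute[OF x y] xy by simp
  show "ketbra2 a x b y *\<^sub>v x = complex_of_real a \<cdot>\<^sub>v x"
    using x y xx yx by (simp add: ketbra2_mult_vec) (intro eq_vecI; simp)
  show "ketbra2 a x b y *\<^sub>v y = complex_of_real b \<cdot>\<^sub>v y"
    using x y yy xy by (simp add: ketbra2_mult_vec) (intro eq_vecI; simp)
  show "ketbra2 a x b y *\<^sub>v u = complex_of_real 0 \<cdot>\<^sub>v u"
    if "u \<in> carrier_vec m" "cinner x u = 0" "cinner y u = 0" for u
    using x y that by (simp add: ketbra2_mult_vec) (intro eq_vecI; simp)
qed

text \<open>Uniqueness of the square root: a psd square root acts on each eigenvector by the square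
  root of its eigenvalue, and \<open>x\<close>, \<open>y\<close> and their orthogonal complement span the space.\<close>

lemma psd_sqrt_ketbra2_unique:
  assumes x: "x \<in> carrier_vec m" and y: "y \<in> carrier_vec m"
    and xx: "cinner x x = 1" and yy: "cinner y y = 1" and xy: "cinner x y = 0"
    and a: "a \<ge> 0" and b: "b \<ge> 0"
    and B: "psd m B" and BB: "B * B = ketbra2 a x b y"
  shows "B = ketbra2 (sqrt a) x (sqrt b) y"
proof -
  note eig = ketbra2_eigenvectors[OF x y xx yy xy]
  have Bc: "B \<in> carrier_mat m m" using B by (auto simp: psd_def)
  show ?thesis
  proof (rule eq_mat_by_mult_vec[OF Bc ketbra2_carrier[OF x y]])
    fix u :: "complex vec" assume u: "u \<in> carrier_vec m"
    define z where "z = u - (cinner x u \<cdot>\<^sub>v x + cinner y u \<cdot>\<^sub>v y)"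
    have zc: "z \<in> carrier_vec m" using x y u by (simp add: z_def)
    have "cinner x z = 0" "cinner y z = 0"
      unfolding z_def using x y u xx yy xy cinner_commute[OF x y]
      by (simp_all add: cinner_diff_right[of _ m] cinner_add_right[of _ m] cinner_smult_right[of _ m])
    then have Bz: "B *\<^sub>v z = complex_of_real (sqrt 0) \<cdot>\<^sub>v z"
      using psd_sqrt_eigenvector[OF B BB zc eig(3)[OF zc]] by simp
    have Bx: "B *\<^sub>v x = complex_of_real (sqrt a) \<cdot>\<^sub>v x" by (rule psd_sqrt_eigenvector[OF B BB x eig(1) a])
    have By: "B *\<^sub>v y = complex_of_real (sqrt b) \<cdot>\<^sub>v y" by (rule psd_sqrt_eigenvector[OF B BB y eig(2) b])
    have ud: "u = cinner x u \<cdot>\<^sub>v x + cinner y u \<cdot>\<^sub>v y + z"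
      unfolding z_def using x y u by (intro eq_vecI) auto
    have "B *\<^sub>v u = cinner x u \<cdot>\<^sub>v (B *\<^sub>v x) + cinner y u \<cdot>\<^sub>v (B *\<^sub>v y) + B *\<^sub>v z"
      using Bc x y zc
      by (subst ud) (simp add: mult_add_distrib_mat_vec mult_mat_vec; intro eq_vecI; simp)
    also have "\<dots> = ketbra2 (sqrt a) x (sqrt b) y *\<^sub>v u"
      unfolding Bx By Bz using x y u zc by (simp add: ketbra2_mult_vec) (intro eq_vecI; simp)
    finally show "B *\<^sub>v u = ketbra2 (sqrt a) x (sqrt b) y *\<^sub>v u" .
  qed
qed

lemma sqrtm_ketbra2:
  assumes x: "x \<in> carrier_vec m" and y: "y \<in> carrier_vec m"
    and xx: "cinner x x = 1" and yy: "cinner y y = 1" and xy: "cinner x y = 0"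
    and a: "a \<ge> 0" and b: "b \<ge> 0"
  shows "sqrtm (ketbra2 a x b y) = ketbra2 (sqrt a) x (sqrt b) y"
proof -
  let ?C = "ketbra2 (sqrt a) x (sqrt b) y"
  have yx: "cinner y x = 0" using cinner_commute[OF x y] xy by simp
  have "?C * ?C = ketbra2 a x b y"
  proof (rule eq_mat_by_mult_vec[of _ m])
    fix u :: "complex vec" assume u: "u \<in> carrier_vec m"
    have "?C * ?C *\<^sub>v u = ?C *\<^sub>v (?C *\<^sub>v u)"
      using ketbra2_carrier[OF x y, of "sqrt a" "sqrt b"] u by (simp add: assoc_mult_mat_vec)
    also have "\<dots> = ketbra2 a x b y *\<^sub>v u"
      using x y u xx yy xy yx a b
      by (simp add: ketbra2_mult_vec cinner_add_right[of _ m] cinner_smult_right[of _ m]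
          of_real_sqrt_mult_self)
    finally show "?C * ?C *\<^sub>v u = ketbra2 a x b y *\<^sub>v u" .
  qed (use ketbra2_carrier[OF x y, of "sqrt a" "sqrt b"] ketbra2_carrier[OF x y, of a b] in auto)
  moreover have "dim_row (ketbra2 a x b y) = m" using ketbra2_carrier[OF x y] by auto
  ultimately show ?thesis unfolding sqrtm_def
    using psd_sqrt_ketbra2_unique[OF assms] psd_ketbra2[OF x y] a b by (intro the_equality) auto
qed

lemma ketbra2_sandwich:
  assumes X: "X \<in> carrier_vec m" and V: "V \<in> carrier_vec m" and E: "E \<in> carrier_vec m"
    and XX: "cinner X X = 1" and EE: "cinner E E = 1" and XE: "cinner X E = 0" and VE: "cinner V E = 0"
  shows "ketbra2 r X s E * ketbra2 p V t E * ketbra2 r X s E =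
    ketbra2 (r\<^sup>2 * p * (cmod (cinner X V))\<^sup>2) X (s\<^sup>2 * t) E"
proof (rule eq_mat_by_mult_vec[of _ m])
  let ?R = "ketbra2 r X s E" and ?S = "ketbra2 p V t E"
  have Rc: "?R \<in> carrier_mat m m" and Sc: "?S \<in> carrier_mat m m" using ketbra2_carrier X E V by auto
  then show "?R * ?S * ?R \<in> carrier_mat m m" by simp
  show "ketbra2 (r\<^sup>2 * p * (cmod (cinner X V))\<^sup>2) X (s\<^sup>2 * t) E \<in> carrier_mat m m"
    using ketbra2_carrier[OF X E] .
  fix u :: "complex vec" assume u: "u \<in> carrier_vec m"
  have EX: "cinner E X = 0" using cinner_commute[OF X E] XE by simp
  have EV: "cinner E V = 0" using cinner_commute[OF V E] VE by simp
  have VX: "cinner V X = cnj (cinner X V)" using cinner_commute[OF X V] by simp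
  have "?R * ?S * ?R *\<^sub>v u = ?R *\<^sub>v (?S *\<^sub>v (?R *\<^sub>v u))"
    using Rc Sc u by (simp add: assoc_mult_mat_vec[of _ m m _ m])
  also have "\<dots> = (complex_of_real r * (complex_of_real p * (complex_of_real r * cinner X u * cinner V X))
        * cinner X V) \<cdot>\<^sub>v X
      + (complex_of_real s * (complex_of_real t * (complex_of_real s * cinner E u))) \<cdot>\<^sub>v E"
    using X V E u XX EE XE VE EX EV
    by (simp add: ketbra2_mult_vec cinner_add_right[of _ m] cinner_smult_right[of _ m] algebra_simps)
  also have "\<dots> = ketbra2 (r\<^sup>2 * p * (cmod (cinner X V))\<^sup>2) X (s\<^sup>2 * t) E *\<^sub>v u"
  proof -
    have "cinner V X * cinner X V = complex_of_real ((cmod (cinner X V))\<^sup>2)"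
      unfolding VX using mult_cnj_eq_cmod_square[of "cinner X V"] by (simp add: mult.commute)
    then have "complex_of_real r * (complex_of_real p * (complex_of_real r * cinner X u * cinner V X))
        * cinner X V = complex_of_real (r\<^sup>2 * p) * cinner X u * (cinner V X * cinner X V)"
      by (simp add: power2_eq_square mult_ac)
    also have "\<dots> = complex_of_real (r\<^sup>2 * p * (cmod (cinner X V))\<^sup>2) * cinner X u"
      unfolding \<open>cinner V X * cinner X V = _\<close> by (simp add: mult_ac)
    finally have coeff: "complex_of_real r * (complex_of_real p * (complex_of_real r * cinner X u
        * cinner V X)) * cinner X V = complex_of_real (r\<^sup>2 * p * (cmod (cinner X V))\<^sup>2) * cinner X u" .
    show ?thesis using X E u
      by (simp only: coeff) (simp add: ketbra2_mult_vec power2_eq_square mult_ac)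
  qed
  finally show "?R * ?S * ?R *\<^sub>v u = ketbra2 (r\<^sup>2 * p * (cmod (cinner X V))\<^sup>2) X (s\<^sup>2 * t) E *\<^sub>v u" .
qed

lemma fidelity_ketbra2:
  assumes X: "X \<in> carrier_vec m" and V: "V \<in> carrier_vec m" and E: "E \<in> carrier_vec m"
    and XX: "cinner X X = 1" and EE: "cinner E E = 1" and XE: "cinner X E = 0" and VE: "cinner V E = 0"
    and q: "0 \<le> q" "q \<le> 1" and p: "0 \<le> p" "p \<le> 1"
  shows "fidelity (ketbra2 q X (1-q) E) (ketbra2 p V (1-p) E) =
     (sqrt (q*p) * cmod (cinner X V) + sqrt ((1-q)*(1-p)))\<^sup>2"
proof -
  have "sqrtm (ketbra2 q X (1-q) E) = ketbra2 (sqrt q) X (sqrt (1-q)) E"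
    using sqrtm_ketbra2[OF X E XX EE XE] q by simp
  moreover have "ketbra2 (sqrt q) X (sqrt (1-q)) E * ketbra2 p V (1-p) E * ketbra2 (sqrt q) X (sqrt (1-q)) E
      = ketbra2 (q * p * (cmod (cinner X V))\<^sup>2) X ((1-q) * (1-p)) E"
    using ketbra2_sandwich[OF X V E XX EE XE VE] q by simp
  moreover have "sqrtm (ketbra2 (q * p * (cmod (cinner X V))\<^sup>2) X ((1-q) * (1-p)) E) =
      ketbra2 (sqrt (q * p * (cmod (cinner X V))\<^sup>2)) X (sqrt ((1-q) * (1-p))) E"
    using sqrtm_ketbra2[OF X E XX EE XE] q p by simp
  ultimately show ?thesis
    unfolding fidelity_def using X E XX EE by (simp add: mtrace_ketbra2 real_sqrt_mult)
qed

lemma sqrt_convex_comb_square_le: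
  fixes q p s :: real
  assumes "0 \<le> q" "q \<le> 1" "0 \<le> p" "p \<le> 1" "0 \<le> s"
  shows "(sqrt (q*p) * s + sqrt ((1-q)*(1-p)))\<^sup>2 \<le> q * s\<^sup>2 + (1 - q)"
proof -
  define A B X Y where "A = sqrt q * s" "B = sqrt (1-q)" "X = sqrt p" "Y = sqrt (1-p)"
  have "(sqrt (q*p) * s + sqrt ((1-q)*(1-p)))\<^sup>2 = (A*X + B*Y)\<^sup>2"
    by (simp add: A_B_X_Y_def real_sqrt_mult ac_simps)
  also have "\<dots> = (A\<^sup>2 + B\<^sup>2) * (X\<^sup>2 + Y\<^sup>2) - (A*Y - B*X)\<^sup>2"
    by (simp add: power2_eq_square algebra_simps)
  also have "\<dots> \<le> (A\<^sup>2 + B\<^sup>2) * (X\<^sup>2 + Y\<^sup>2)" by simp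
  also have "\<dots> = q * s\<^sup>2 + (1 - q)" using assms by (simp add: A_B_X_Y_def power_mult_distrib)
  finally show ?thesis .
qed

definition ext_vec :: "nat \<Rightarrow> complex vec \<Rightarrow> complex vec" where
  "ext_vec k v = vec (2^k+1) (\<lambda>i. if i < 2^k then v $ i else 0)"

definition bot_vec :: "nat \<Rightarrow> complex vec" where
  "bot_vec k = unit_vec (2^k+1) (2^k)"

lemma ext_vec_carrier: "ext_vec k v \<in> carrier_vec (2^k+1)"
  by (simp add: ext_vec_def)

lemma bot_vec_carrier: "bot_vec k \<in> carrier_vec (2^k+1)"
  by (simp add: bot_vec_def)

lemma cinner_ext_vec:
  "v \<in> carrier_vec (2^k) \<Longrightarrow> w \<in> carrier_vec (2^k) \<Longrightarrow> cinner (ext_vec k v) (ext_vec k w) = cinner v w"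
  unfolding cinner_def ext_vec_def by simp

lemma cinner_ext_vec_bot_vec: "cinner (ext_vec k v) (bot_vec k) = 0"
  unfolding cinner_def ext_vec_def bot_vec_def by (simp add: unit_vec_def)

lemma cinner_bot_vec: "cinner (bot_vec k) (bot_vec k) = 1"
  unfolding cinner_def bot_vec_def by (simp add: unit_vec_def)

lemma ext_state_ketbra: "v \<in> carrier_vec (2^k) \<Longrightarrow> ext_state k (ketbra v) = ketbra2 1 (ext_vec k v) 0 (bot_vec k)"
  by (rule eq_matI) (auto simp: ext_state_def ketbra2_def ketbra_def ext_vec_def bot_vec_def)

lemma mix_bot_ketbra:
  "v \<in> carrier_vec (2^k) \<Longrightarrow> mix_bot k p (ketbra v) = ketbra2 p (ext_vec k v) (1-p) (bot_vec k)"
  by (rule eq_matI)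
    (auto simp: mix_bot_def ext_state_def bot_state_def ketbra2_def ketbra_def ext_vec_def bot_vec_def)

lemma fidelity_mix_bot:
  assumes v: "v \<in> carrier_vec (2^k)" and w: "w \<in> carrier_vec (2^k)" and ww: "cinner w w = 1"
    and q: "0 \<le> q" "q \<le> 1" and p: "0 \<le> p" "p \<le> 1"
  shows "fidelity (mix_bot k q (ketbra w)) (mix_bot k p (ketbra v)) =
     (sqrt (q*p) * cmod (cinner w v) + sqrt ((1-q)*(1-p)))\<^sup>2"
  unfolding mix_bot_ketbra[OF v] mix_bot_ketbra[OF w]
  using fidelity_ketbra2[OF ext_vec_carrier ext_vec_carrier bot_vec_carrier] q p
  by (simp add: cinner_ext_vec[OF w v] cinner_ext_vec[OF w w] ww cinner_bot_vec cinner_ext_vec_bot_vec)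

lemma fidelity_mix_bot_ext_state:
  assumes v: "v \<in> carrier_vec (2^k)" and vv: "cinner v v = 1" and q: "0 \<le> q" "q \<le> 1"
  shows "fidelity (mix_bot k q (ketbra v)) (ext_state k (ketbra v)) = q"
  unfolding mix_bot_ketbra[OF v] ext_state_ketbra[OF v]
  using fidelity_ketbra2[OF ext_vec_carrier[of k v] ext_vec_carrier[of k v] bot_vec_carrier[of k], of q 1] q
  by (simp add: cinner_ext_vec[OF v v] vv cinner_bot_vec cinner_ext_vec_bot_vec)

section \<open>Tensor products of vectors\<close>

lemma sum_nat_div_mod:
  fixes m n :: nat
  shows "(\<Sum>i<m*n. f (i div n) (i mod n)) = (\<Sum>a<m. \<Sum>b<n. f a b)"
proof -
  have "(\<Sum>i<m*n. f (i div n) (i mod n)) = (\<Sum>a<m. \<Sum>i\<in>{a*n..<a*n+n}. f (i div n) (i mod n))"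
    by (simp add: sum.nat_group)
  also have "\<dots> = (\<Sum>a<m. \<Sum>b<n. f a b)"
  proof (rule sum.cong[OF refl])
    fix a
    have "i div n = a \<and> i mod n = i - a*n" if "a*n \<le> i" "i < a*n+n" for i
    proof -
      have "(a*n + b) div n = a \<and> (a*n + b) mod n = b" if "b < n" for b
        using that by simp
      moreover have "a*n + (i - a*n) = i" "i - a*n < n" using that by auto
      ultimately show ?thesis by metis
    qed
    then show "(\<Sum>i\<in>{a*n..<a*n+n}. f (i div n) (i mod n)) = (\<Sum>b<n. f a b)"
      by (intro sum.reindex_bij_witness[of _ "\<lambda>b. a*n+b" "\<lambda>i. i - a*n"]) auto
  qed
  finally show ?thesis .
qed

lemma mod_mult_div_eq_div_mod:
  fixes i b c :: nat
  assumes "0 < c"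
  shows "i mod (b * c) div c = i div c mod b"
proof -
  have "i mod (b * c) = c * (i div c mod b) + i mod c"
    using mod_mult2_eq[of i c b] by (simp add: mult.commute)
  then show ?thesis using assms by simp
qed

definition vkron :: "complex vec \<Rightarrow> complex vec \<Rightarrow> complex vec" where
  "vkron a b = vec (dim_vec a * dim_vec b) (\<lambda>i. a $ (i div dim_vec b) * b $ (i mod dim_vec b))"

definition vkron_list :: "complex vec list \<Rightarrow> complex vec" where
  "vkron_list vs = foldr vkron vs (vec 1 (\<lambda>_. 1))"

lemma dim_vkron [simp]: "dim_vec (vkron a b) = dim_vec a * dim_vec b"
  by (simp add: vkron_def)

lemma vkron_list_Nil [simp]: "vkron_list [] = vec 1 (\<lambda>_. 1)"
  and vkron_list_Cons [simp]: "vkron_list (v # vs) = vkron v (vkron_list vs)"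
  by (simp_all add: vkron_list_def)

lemma vkron_list_carrier: "\<forall>v\<in>set vs. v \<in> carrier_vec d \<Longrightarrow> vkron_list vs \<in> carrier_vec (d ^ length vs)"
proof (induction vs)
  case (Cons v vs)
  then have "v \<in> carrier_vec d" "vkron_list vs \<in> carrier_vec (d ^ length vs)" by simp_all
  then show ?case by (intro carrier_vecI) (simp add: carrier_vecD)
qed simp

lemma cinner_vkron:
  assumes "dim_vec c = dim_vec a" "dim_vec d = dim_vec b"
  shows "cinner (vkron a b) (vkron c d) = cinner a c * cinner b d"
proof -
  let ?f = "\<lambda>x y. cnj (a $ x * b $ y) * (c $ x * d $ y)"
  have "cinner (vkron a b) (vkron c d) =
      (\<Sum>i<dim_vec a * dim_vec b. ?f (i div dim_vec b) (i mod dim_vec b))"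
    using assms unfolding cinner_def vkron_def by (intro sum.cong) auto
  also have "\<dots> = (\<Sum>x<dim_vec a. \<Sum>y<dim_vec b. ?f x y)" by (rule sum_nat_div_mod)
  also have "\<dots> = cinner a c * cinner b d"
    unfolding cinner_def sum_product by (intro sum.cong refl) (simp add: algebra_simps)
  finally show ?thesis .
qed

lemma cinner_vkron_list_map:
  assumes "\<forall>i\<in>set L. g i \<in> carrier_vec d \<and> h i \<in> carrier_vec d"
  shows "cinner (vkron_list (map g L)) (vkron_list (map h L)) = (\<Prod>i\<leftarrow>L. cinner (g i) (h i))"
  using assms
proof (induction L)
  case Nil
  then show ?case by (simp add: cinner_def)
next
  case (Cons i L)
  then have gi: "g i \<in> carrier_vec d" "h i \<in> carrier_vec d"
    and L: "\<forall>j\<in>set L. g j \<in> carrier_vec d \<and> h j \<in> carrier_vec d" by auto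
  have "vkron_list (map g L) \<in> carrier_vec (d ^ length L)" "vkron_list (map h L) \<in> carrier_vec (d ^ length L)"
    using L vkron_list_carrier[of "map g L" d] vkron_list_carrier[of "map h L" d] by auto
  then have "cinner (vkron_list (map g (i # L))) (vkron_list (map h (i # L))) =
      cinner (g i) (h i) * cinner (vkron_list (map g L)) (vkron_list (map h L))"
    unfolding list.map vkron_list_Cons using gi by (intro cinner_vkron) auto
  then show ?case using Cons.IH[OF L] by simp
qed

lemma kron_ketbra: "kron (ketbra a) (ketbra b) = ketbra (vkron a b)"
proof (rule eq_matI)
  fix i j assume "i < dim_row (ketbra (vkron a b))" "j < dim_col (ketbra (vkron a b))"
  then have ij: "i < dim_vec a * dim_vec b" "j < dim_vec a * dim_vec b" by (auto simp: ketbra_def)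
  then have "dim_vec b > 0" by (cases "dim_vec b") auto
  moreover have "i div dim_vec b < dim_vec a" "j div dim_vec b < dim_vec a"
    using ij by (auto simp: less_mult_imp_div_less)
  ultimately show "kron (ketbra a) (ketbra b) $$ (i, j) = ketbra (vkron a b) $$ (i, j)"
    using ij by (simp add: kron_def ketbra_def vkron_def)
qed (auto simp: kron_def ketbra_def)

lemma kron_list_ketbra: "kron_list (map ketbra vs) = ketbra (vkron_list vs)"
proof (induction vs)
  case Nil
  show ?case unfolding kron_list_def vkron_list_def by (rule eq_matI) (auto simp: ketbra_def)
next
  case (Cons v vs)
  then show ?case by (simp add: kron_list_def vkron_list_def kron_ketbra)
qed

lemma vkron_assoc: "vkron (vkron a b) c = vkron a (vkron b c)"
proof (rule eq_vecI)
  fix i assume "i < dim_vec (vkron a (vkron b c))"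
  then have i: "i < dim_vec a * dim_vec b * dim_vec c" by simp
  then have nc: "dim_vec c > 0" by (cases "dim_vec c") auto
  from i have nb: "dim_vec b > 0" by (cases "dim_vec b") auto
  have "i div (dim_vec b * dim_vec c) = i div dim_vec c div dim_vec b"
    by (metis div_mult2_eq mult.commute)
  moreover have "i mod (dim_vec b * dim_vec c) div dim_vec c = i div dim_vec c mod dim_vec b"
    using nc by (rule mod_mult_div_eq_div_mod)
  moreover have "i mod (dim_vec b * dim_vec c) mod dim_vec c = i mod dim_vec c"
    by (simp add: mod_mod_cancel)
  moreover have "i mod (dim_vec b * dim_vec c) < dim_vec b * dim_vec c" using nb nc by simp
  moreover have "i div dim_vec c < dim_vec a * dim_vec b" using i by (rule less_mult_imp_div_less)
  ultimately show "vkron (vkron a b) c $ i = vkron a (vkron b c) $ i"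
    using i nc by (simp add: vkron_def)
qed simp

lemma vkron_Nil_right [simp]: "vkron v (vkron_list []) = v"
  by (rule eq_vecI) (auto simp: vkron_def)

lemma vkron_Nil_left [simp]: "vkron (vkron_list []) v = v"
  by (rule eq_vecI) (auto simp: vkron_def)

lemma vkron_list_snoc: "vkron_list (vs @ [v]) = vkron (vkron_list vs) v"
  by (induction vs) (simp_all add: vkron_assoc del: vkron_list_Nil)

lemma two_pow_pred_mult_two: "k \<ge> 1 \<Longrightarrow> (2::nat)^(k-1) * 2 = 2^k"
  by (cases k) auto

definition plus_vec :: "nat \<Rightarrow> complex vec" where
  "plus_vec k = vkron_list (replicate k (plus_a 0))"

definition plus_alpha_vec :: "nat \<Rightarrow> real \<Rightarrow> complex vec" where
  "plus_alpha_vec k \<alpha> = vkron (plus_vec (k-1)) (plus_a \<alpha>)"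

lemma plus_k_eq_ketbra: "plus_k k = ketbra (plus_vec k)"
  unfolding plus_k_def plus_vec_def kron_list_ketbra[symmetric] by simp

lemma plus_k_alpha_eq_ketbra: "plus_k_alpha k \<alpha> = ketbra (plus_alpha_vec k \<alpha>)"
  unfolding plus_k_alpha_def plus_alpha_vec_def plus_vec_def kron_ketbra[symmetric]
    kron_list_ketbra[symmetric] by simp

lemma plus_vec_eq_plus_alpha_vec:
  assumes "k \<ge> 1"
  shows "plus_vec k = plus_alpha_vec k 0"
proof -
  have "replicate k (plus_a 0) = replicate (k-1) (plus_a 0) @ [plus_a 0]"
    using assms by (cases k) (auto simp: replicate_append_same)
  then show ?thesis unfolding plus_alpha_vec_def plus_vec_def by (simp add: vkron_list_snoc)
qed

lemma dim_plus_a [simp]: "dim_vec (plus_a \<alpha>) = 2"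
  by (simp add: plus_a_def)

lemma cinner_plus_a: "cinner (plus_a \<alpha>) (plus_a \<beta>) = (1 + cnj (cis \<alpha>) * cis \<beta>) / 2"
  unfolding cinner_def plus_a_def
  by (simp add: numeral_2_eq_2 lessThan_Suc field_simps power2_eq_square flip: of_real_mult)

lemma plus_a_carrier: "plus_a \<alpha> \<in> carrier_vec 2"
  by (simp add: plus_a_def)

lemma plus_vec_carrier: "plus_vec k \<in> carrier_vec (2^k)"
  unfolding plus_vec_def using vkron_list_carrier[of "replicate k (plus_a 0)" 2] plus_a_carrier
  by simp

lemma plus_alpha_vec_carrier:
  assumes "k \<ge> 1"
  shows "plus_alpha_vec k \<alpha> \<in> carrier_vec (2^k)"
proof (rule carrier_vecI)
  have "dim_vec (plus_vec (k-1)) = 2^(k-1)" using plus_vec_carrier by (rule carrier_vecD)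
  moreover have "(2::nat)^(k-1) * 2 = 2^k" using assms by (rule two_pow_pred_mult_two)
  ultimately show "dim_vec (plus_alpha_vec k \<alpha>) = 2^k" by (simp add: plus_alpha_vec_def)
qed

lemma cinner_plus_vec: "cinner (plus_vec k) (plus_vec k) = 1"
proof (induction k)
  case 0
  show ?case by (simp add: plus_vec_def cinner_def)
next
  case (Suc k)
  then show ?case by (simp add: plus_vec_def cinner_vkron cinner_plus_a)
qed

lemma cinner_plus_alpha_vec:
  "cinner (plus_alpha_vec k \<alpha>) (plus_alpha_vec k \<beta>) = (1 + cnj (cis \<alpha>) * cis \<beta>) / 2"
  by (simp add: plus_alpha_vec_def cinner_vkron cinner_plus_vec cinner_plus_a)

lemma cinner_plus_alpha_vec_self: "cinner (plus_alpha_vec k \<alpha>) (plus_alpha_vec k \<alpha>) = 1"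
  by (simp add: cinner_plus_alpha_vec cis_cnj cis_mult)

lemma cmod_cinner_plus_alpha_vec_plus_vec:
  assumes "k \<ge> 1"
  shows "(cmod (cinner (plus_alpha_vec k \<alpha>) (plus_vec k)))\<^sup>2 = (1 + cos \<alpha>) / 2"
proof -
  have "(cmod ((1 + cnj (cis \<alpha>)) / 2))\<^sup>2 = ((1 + cos \<alpha>)\<^sup>2 + (sin \<alpha>)\<^sup>2) / 4"
    by (simp add: cmod_def power_divide)
  also have "\<dots> = (1 + cos \<alpha>) / 2"
  proof -
    have "(1 + cos \<alpha>)\<^sup>2 = 1 + 2 * cos \<alpha> + (cos \<alpha>)\<^sup>2" by (simp add: power2_eq_square algebra_simps)
    then have "(1 + cos \<alpha>)\<^sup>2 + (sin \<alpha>)\<^sup>2 = 2 + 2 * cos \<alpha>"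
      using sin_cos_squared_add[of \<alpha>] by linarith
    then show ?thesis by simp
  qed
  finally show ?thesis
    using plus_vec_eq_plus_alpha_vec[OF assms] by (simp add: cinner_plus_alpha_vec)
qed

section \<open>The phase attack\<close>

definition Pgate_diag :: "real \<Rightarrow> nat \<Rightarrow> complex" where
  "Pgate_diag \<alpha> i = (if even i then 1 else cis \<alpha>)"

lemma Aphase_carrier: "k \<ge> 1 \<Longrightarrow> Aphase k \<alpha> \<in> carrier_mat (2^k) (2^k)"
  unfolding Aphase_def kron_def Pgate_def using two_pow_pred_mult_two by simp

lemma Aphase_index:
  assumes k: "k \<ge> 1" and i: "i < 2^k" and j: "j < 2^k"
  shows "Aphase k \<alpha> $$ (i,j) = (if i = j then Pgate_diag \<alpha> i else 0)"
proof -
  have div: "i div 2 < 2^(k-1)" "j div 2 < 2^(k-1)"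
    using i j two_pow_pred_mult_two[OF k] by (metis less_mult_imp_div_less)+
  have "Aphase k \<alpha> $$ (i,j) = 1\<^sub>m (2^(k-1)) $$ (i div 2, j div 2) * Pgate \<alpha> $$ (i mod 2, j mod 2)"
    unfolding Aphase_def kron_def using i j two_pow_pred_mult_two[OF k] by (simp add: Pgate_def)
  also have "\<dots> = (if i = j then Pgate_diag \<alpha> i else 0)"
  proof (cases "i = j")
    case False
    then have "i div 2 \<noteq> j div 2 \<or> i mod 2 \<noteq> j mod 2" by (metis div_mult_mod_eq)
    then show ?thesis using div False by (auto simp: Pgate_def)
  qed (use div in \<open>auto simp: Pgate_def Pgate_diag_def even_iff_mod_2_eq_zero\<close>)
  finally show ?thesis .
qed

lemma Aphase_mult_vec:
  assumes k: "k \<ge> 1" and v: "v \<in> carrier_vec (2^k)"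
  shows "Aphase k \<alpha> *\<^sub>v v = vec (2^k) (\<lambda>i. Pgate_diag \<alpha> i * v $ i)"
proof (rule eq_vecI)
  fix i assume "i < dim_vec (vec (2^k) (\<lambda>i. Pgate_diag \<alpha> i * v $ i))"
  then have i: "i < 2^k" by simp
  have "(Aphase k \<alpha> *\<^sub>v v) $ i = (\<Sum>j<2^k. Aphase k \<alpha> $$ (i,j) * v $ j)"
    by (rule mult_mat_vec_nth[OF Aphase_carrier[OF k] v i])
  also have "\<dots> = (\<Sum>j<2^k. if j = i then Pgate_diag \<alpha> i * v $ j else 0)"
    by (rule sum.cong) (auto simp: Aphase_index[OF k i])
  finally show "(Aphase k \<alpha> *\<^sub>v v) $ i = vec (2^k) (\<lambda>i. Pgate_diag \<alpha> i * v $ i) $ i"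
    using i by simp
qed (use Aphase_carrier[OF k, of \<alpha>] in simp)

lemma cinner_Aphase:
  assumes k: "k \<ge> 1" and v: "v \<in> carrier_vec (2^k)"
  shows "cinner (Aphase k \<alpha> *\<^sub>v v) (Aphase k \<alpha> *\<^sub>v v) = cinner v v"
proof -
  have "cnj (Pgate_diag \<alpha> i) * Pgate_diag \<alpha> i = 1" for i
    by (simp add: Pgate_diag_def cis_cnj cis_mult)
  then show ?thesis unfolding Aphase_mult_vec[OF k v] cinner_def using v
    by (auto intro!: sum.cong simp: algebra_simps)
qed

lemma cmod_convex_comb_cis_ge:
  fixes q0 q1 c \<alpha> :: real
  assumes q: "q0 \<ge> 0" "q1 \<ge> 0" "q0 + q1 = 1" and c: "0 \<le> c" and c\<alpha>: "cos \<alpha> = 2*c^2 - 1"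
  shows "c \<le> cmod (complex_of_real q0 + complex_of_real q1 * cis \<alpha>)"
proof -
  have s: "(sin \<alpha>)\<^sup>2 = 1 - (cos \<alpha>)\<^sup>2" using sin_cos_squared_add[of \<alpha>] by linarith
  have "(cmod (complex_of_real q0 + complex_of_real q1 * cis \<alpha>))\<^sup>2 = (q0 + q1 * cos \<alpha>)\<^sup>2 + (q1 * sin \<alpha>)\<^sup>2"
    by (simp add: cmod_power2)
  also have "\<dots> = c\<^sup>2 + (1 - c\<^sup>2) * (q0 - q1)\<^sup>2"
  proof -
    have q1: "q1 = 1 - q0" using q by simp
    show ?thesis unfolding power_mult_distrib s c\<alpha> q1 by (simp add: power2_eq_square algebra_simps)
  qed
  also have "\<dots> \<ge> c\<^sup>2"
    using c\<alpha> cos_le_one[of \<alpha>] by simp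
  finally show ?thesis by (rule power2_le_imp_le) simp
qed

lemma cmod_cinner_Aphase_ge:
  assumes k: "k \<ge> 1" and v: "v \<in> carrier_vec (2^k)" and vv: "cinner v v = 1"
    and c: "0 \<le> c" and c\<alpha>: "cos \<alpha> = 2*c^2 - 1"
  shows "c \<le> cmod (cinner v (Aphase k \<alpha> *\<^sub>v v))"
proof -
  define w where "w i = (cmod (v $ i))\<^sup>2" for i
  define q0 where "q0 = (\<Sum>i<2^k. if even i then w i else 0)"
  define q1 where "q1 = (\<Sum>i<2^k. if even i then 0 else w i)"
  have "cinner v (Aphase k \<alpha> *\<^sub>v v) = (\<Sum>i<2^k. complex_of_real (w i) * Pgate_diag \<alpha> i)"
    unfolding Aphase_mult_vec[OF k v] cinner_def w_def using v
    by (auto intro!: sum.cong simp: mult_cnj_eq_cmod_square mult.commute[of "cnj _"] mult.assoc[symmetric])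
  also have "\<dots> = complex_of_real q0 + complex_of_real q1 * cis \<alpha>"
    unfolding q0_def q1_def of_real_sum sum_distrib_right sum.distrib[symmetric]
    by (rule sum.cong) (auto simp: Pgate_diag_def)
  finally have eq: "cinner v (Aphase k \<alpha> *\<^sub>v v) = complex_of_real q0 + complex_of_real q1 * cis \<alpha>" .
  have "q0 + q1 = (\<Sum>i<2^k. w i)"
    unfolding q0_def q1_def sum.distrib[symmetric] by (rule sum.cong) auto
  also have "\<dots> = 1"
  proof -
    have "complex_of_real (\<Sum>i<dim_vec v. w i) = 1" using vv unfolding w_def cinner_self .
    moreover have "dim_vec v = 2^k" using v by simp
    ultimately show ?thesis by (simp only: of_real_eq_1_iff)
  qed
  finally have "q0 + q1 = 1" .
  moreover have "q0 \<ge> 0" "q1 \<ge> 0" unfolding q0_def q1_def w_def by (auto intro!: sum_nonneg)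
  ultimately show ?thesis unfolding eq using cmod_convex_comb_cis_ge c c\<alpha> by blast
qed

lemma attacked_test_output:
  assumes k: "k \<ge> 1" and T: "is_unitary (2^k) T" and x: "is_unit_vec (2^k) x"
    and c: "0 \<le> c" and c\<alpha>: "cos \<alpha> = 2*c^2 - 1"
  shows "attacked k before \<alpha> T \<in> carrier_mat (2^k) (2^k)"
    and "cinner (attacked k before \<alpha> T *\<^sub>v x) (attacked k before \<alpha> T *\<^sub>v x) = 1"
    and "c \<le> cmod (cinner (T *\<^sub>v x) (attacked k before \<alpha> T *\<^sub>v x))"
proof -
  let ?A = "Aphase k \<alpha>"
  have Tc: "T \<in> carrier_mat (2^k) (2^k)" using T by (simp add: is_unitary_def)
  have xc: "x \<in> carrier_vec (2^k)" and xx: "cinner x x = 1" using x by (auto simp: is_unit_vec_def)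
  have Ac: "?A \<in> carrier_mat (2^k) (2^k)" by (rule Aphase_carrier[OF k])
  have Axc: "?A *\<^sub>v x \<in> carrier_vec (2^k)" and Txc: "T *\<^sub>v x \<in> carrier_vec (2^k)"
    using Ac Tc xc by auto
  have Tx: "cinner (T *\<^sub>v x) (T *\<^sub>v x) = 1" using is_unitary_cinner[OF T xc xc] xx by simp
  show "attacked k before \<alpha> T \<in> carrier_mat (2^k) (2^k)"
    using Tc Ac by (simp add: attacked_def)
  have "cinner (attacked k before \<alpha> T *\<^sub>v x) (attacked k before \<alpha> T *\<^sub>v x) = 1 \<and>
      c \<le> cmod (cinner (T *\<^sub>v x) (attacked k before \<alpha> T *\<^sub>v x))"
  proof (cases before)
    case True
    then have "attacked k before \<alpha> T *\<^sub>v x = T *\<^sub>v (?A *\<^sub>v x)"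
      using Tc Ac xc by (simp add: attacked_def assoc_mult_mat_vec)
    then show ?thesis
      using is_unitary_cinner[OF T Axc Axc] is_unitary_cinner[OF T xc Axc]
        cinner_Aphase[OF k xc] cmod_cinner_Aphase_ge[OF k xc xx c c\<alpha>] xx by simp
  next
    case False
    then have "attacked k before \<alpha> T *\<^sub>v x = ?A *\<^sub>v (T *\<^sub>v x)"
      using Tc Ac xc by (simp add: attacked_def assoc_mult_mat_vec)
    then show ?thesis
      using cinner_Aphase[OF k Txc] cmod_cinner_Aphase_ge[OF k Txc Tx c c\<alpha>] Tx by simp
  qed
  then show "cinner (attacked k before \<alpha> T *\<^sub>v x) (attacked k before \<alpha> T *\<^sub>v x) = 1"
    "c \<le> cmod (cinner (T *\<^sub>v x) (attacked k before \<alpha> T *\<^sub>v x))" by auto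
qed

lemma prod_list_map_eq_1: "\<forall>i\<in>set L. f i = 1 \<Longrightarrow> (\<Prod>i\<leftarrow>L. f i) = (1::'a::monoid_mult)"
  by (induction L) auto

lemma prod_list_cmod_ge:
  "0 \<le> c \<Longrightarrow> \<forall>i\<in>set L. c \<le> cmod (f i) \<Longrightarrow> c ^ length L \<le> cmod (\<Prod>i\<leftarrow>L. f i)"
proof (induction L)
  case (Cons i L)
  then have "c * c ^ length L \<le> cmod (f i) * cmod (\<Prod>i\<leftarrow>L. f i)"
    by (intro mult_mono) auto
  then show ?case by (simp add: norm_mult)
qed simp

lemma cinner_vkron_list_map_self:
  assumes "\<forall>i\<in>set L. g i \<in> carrier_vec d \<and> cinner (g i) (g i) = 1"
  shows "cinner (vkron_list (map g L)) (vkron_list (map g L)) = 1"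
  using assms by (simp add: cinner_vkron_list_map[where d = d] prod_list_map_eq_1)

lemma cmod_cinner_vkron_list_map_ge:
  assumes "\<forall>i\<in>set L. g i \<in> carrier_vec d \<and> h i \<in> carrier_vec d \<and> c \<le> cmod (cinner (g i) (h i))"
    and "0 \<le> c"
  shows "c ^ length L \<le> cmod (cinner (vkron_list (map g L)) (vkron_list (map h L)))"
  using assms by (simp add: cinner_vkron_list_map[where d = d] prod_list_cmod_ge)

lemma vkron_list_map_mult_carrier:
  assumes "\<forall>i\<in>set L. T i \<in> carrier_mat d d \<and> x i \<in> carrier_vec d"
  shows "vkron_list (map (\<lambda>i. T i *\<^sub>v x i) L) \<in> carrier_vec (d ^ length L)"
  using vkron_list_carrier[of "map (\<lambda>i. T i *\<^sub>v x i) L" d] assms by (auto intro: mult_mat_vec_carrier)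

lemma length_filter_neq: "l \<in> {1..n+1} \<Longrightarrow> length (filter (\<lambda>i. i \<noteq> l) [1..<n+2]) = n"
proof -
  assume l: "l \<in> {1..n+1}"
  have "length (filter (\<lambda>i. i \<noteq> l) [1..<n+2]) = card ({i. i \<noteq> l} \<inter> set [1..<n+2])"
    by (rule distinct_length_filter) simp
  also have "{i. i \<noteq> l} \<inter> set [1..<n+2] = {1..<n+2} - {l}" by auto
  also have "card \<dots> = n" using l by simp
  finally show ?thesis .
qed

lemma accept_prob_eq_qform:
  assumes l: "l \<in> {1..n+1}"
    and T: "\<forall>i\<in>{1..n+1}. T i \<in> carrier_mat d d" and x: "\<forall>i\<in>{1..n+1}. x i \<in> carrier_vec d"
    and M: "M \<in> carrier_mat (d^n) (d^n)"
  shows "accept_prob M T x n l =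
    Re (qform M (vkron_list (map (\<lambda>i. T i *\<^sub>v x i) (filter (\<lambda>i. i \<noteq> l) [1..<n+2]))))"
proof -
  define L where "L = filter (\<lambda>i. i \<noteq> l) [1..<n+2]"
  have L: "set L \<subseteq> {1..n+1}" "length L = n" using length_filter_neq[OF l] by (auto simp: L_def)
  have "map (\<lambda>i. T i * ketbra (x i) * dag (T i)) L = map ketbra (map (\<lambda>i. T i *\<^sub>v x i) L)"
    using T x L by (auto intro!: mult_ketbra_dag)
  then have "kron_list (map (\<lambda>i. T i * ketbra (x i) * dag (T i)) L)
      = ketbra (vkron_list (map (\<lambda>i. T i *\<^sub>v x i) L))"
    by (simp only: kron_list_ketbra)
  moreover have "vkron_list (map (\<lambda>i. T i *\<^sub>v x i) L) \<in> carrier_vec (d^n)"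
    using vkron_list_map_mult_carrier[of L T d x] T x L by blast
  ultimately show ?thesis
    unfolding accept_prob_def L_def[symmetric] using mtrace_mult_ketbra[OF M] by simp
qed

lemma accept_prob_bounds:
  assumes l: "l \<in> {1..n+1}"
    and T: "\<forall>i\<in>{1..n+1}. T i \<in> carrier_mat d d" and x: "\<forall>i\<in>{1..n+1}. x i \<in> carrier_vec d"
    and unit: "\<forall>i\<in>{1..n+1}. cinner (T i *\<^sub>v x i) (T i *\<^sub>v x i) = 1"
    and \<mu>: "effect (d^n) \<mu>"
  shows "0 \<le> accept_prob \<mu> T x n l" "accept_prob \<mu> T x n l \<le> 1"
proof -
  define L where "L = filter (\<lambda>i. i \<noteq> l) [1..<n+2]"
  have L: "set L \<subseteq> {1..n+1}" "length L = n" using length_filter_neq[OF l] by (auto simp: L_def)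
  have out: "\<forall>i\<in>set L. T i \<in> carrier_mat d d \<and> x i \<in> carrier_vec d \<and>
      cinner (T i *\<^sub>v x i) (T i *\<^sub>v x i) = 1"
    using T x unit L(1) by blast
  define P where "P = vkron_list (map (\<lambda>i. T i *\<^sub>v x i) L)"
  have "P \<in> carrier_vec (d^n)"
    unfolding P_def L(2)[symmetric] using out by (intro vkron_list_map_mult_carrier) blast
  moreover have "cinner P P = 1"
    unfolding P_def using out
    by (intro cinner_vkron_list_map_self[where d = d]) (auto intro: mult_mat_vec_carrier)
  moreover have "\<mu> \<in> carrier_mat (d^n) (d^n)" using \<mu> by (simp add: effect_def psd_def)
  ultimately show "0 \<le> accept_prob \<mu> T x n l" "accept_prob \<mu> T x n l \<le> 1"
    using effect_qform_bounds[OF \<mu>] accept_prob_eq_qform[OF l T x] by (simp_all add: P_def L_def)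
qed

text \<open>The \<open>n\<close> test outputs jointly have overlap at least \<open>c\<^sup>n \<ge> 1 - n (1 - c)\<close> (Bernoulli).\<close>

lemma accept_prob_perturb_ge:
  assumes l: "l \<in> {1..n+1}"
    and T: "\<forall>i\<in>{1..n+1}. T i \<in> carrier_mat d d" and T': "\<forall>i\<in>{1..n+1}. T' i \<in> carrier_mat d d"
    and x: "\<forall>i\<in>{1..n+1}. x i \<in> carrier_vec d"
    and unit: "\<forall>i\<in>{1..n+1}. cinner (T i *\<^sub>v x i) (T i *\<^sub>v x i) = 1"
      "\<forall>i\<in>{1..n+1}. cinner (T' i *\<^sub>v x i) (T' i *\<^sub>v x i) = 1"
    and overlap: "\<forall>i\<in>{1..n+1}. c \<le> cmod (cinner (T i *\<^sub>v x i) (T' i *\<^sub>v x i))"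
    and c: "0 \<le> c" "c \<le> 1" and \<mu>: "effect (d^n) \<mu>"
  shows "4 * accept_prob \<mu> T x n l - 3 - 8/3 * real n * (1 - c) \<le> accept_prob \<mu> T' x n l"
proof -
  define L where "L = filter (\<lambda>i. i \<noteq> l) [1..<n+2]"
  have L: "set L \<subseteq> {1..n+1}" "length L = n" using length_filter_neq[OF l] by (auto simp: L_def)
  have out: "\<forall>i\<in>set L. T i \<in> carrier_mat d d \<and> T' i \<in> carrier_mat d d \<and> x i \<in> carrier_vec d \<and>
      cinner (T i *\<^sub>v x i) (T i *\<^sub>v x i) = 1 \<and> cinner (T' i *\<^sub>v x i) (T' i *\<^sub>v x i) = 1 \<and>
      c \<le> cmod (cinner (T i *\<^sub>v x i) (T' i *\<^sub>v x i))"
    using T T' x unit overlap L(1) by blast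
  define P where "P = vkron_list (map (\<lambda>i. T i *\<^sub>v x i) L)"
  define F where "F = vkron_list (map (\<lambda>i. T' i *\<^sub>v x i) L)"
  have \<mu>c: "\<mu> \<in> carrier_mat (d^n) (d^n)" using \<mu> by (simp add: effect_def psd_def)
  have PF: "P \<in> carrier_vec (d^n)" "F \<in> carrier_vec (d^n)"
    unfolding P_def F_def L(2)[symmetric] using out by (intro vkron_list_map_mult_carrier; blast)+
  have PPFF: "cinner P P = 1" "cinner F F = 1"
    unfolding P_def F_def using out
    by (intro cinner_vkron_list_map_self[where d = d]; auto intro: mult_mat_vec_carrier)+
  have "c ^ n \<le> cmod (cinner P F)"
    unfolding P_def F_def L(2)[symmetric] using out c
    by (intro cmod_cinner_vkron_list_map_ge[where d = d]) (auto intro: mult_mat_vec_carrier)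
  moreover have "1 - c ^ n \<le> real n * (1 - c)"
    using Bernoulli_inequality[of "c - 1" n] c by (simp add: algebra_simps)
  moreover have "accept_prob \<mu> T x n l = Re (qform \<mu> P)"
    unfolding P_def L_def by (rule accept_prob_eq_qform[OF l T x \<mu>c])
  moreover have "accept_prob \<mu> T' x n l = Re (qform \<mu> F)"
    unfolding F_def L_def by (rule accept_prob_eq_qform[OF l T' x \<mu>c])
  ultimately show ?thesis
    using effect_qform_perturb[OF \<mu> PF PPFF] by argo
qed

section \<open>Averaging over the number of rounds and the output round\<close>

lemma round_avg_bounds:
  fixes \<Omega> :: "nat \<Rightarrow> real" and f :: "nat \<Rightarrow> nat \<Rightarrow> real"
  assumes \<Omega>0: "\<forall>n. \<Omega> n \<ge> 0" and \<Omega>1: "\<Omega> sums 1"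
    and f: "\<And>n l. l \<in> {1..n+1} \<Longrightarrow> 0 \<le> f n l \<and> f n l \<le> 1"
  shows "summable (\<lambda>n. \<Omega> n / real (n+1) * (\<Sum>l\<in>{1..n+1}. f n l))"
    and "0 \<le> (\<Sum>n. \<Omega> n / real (n+1) * (\<Sum>l\<in>{1..n+1}. f n l))"
    and "(\<Sum>n. \<Omega> n / real (n+1) * (\<Sum>l\<in>{1..n+1}. f n l)) \<le> 1"
proof -
  define g where "g n = \<Omega> n / real (n+1) * (\<Sum>l\<in>{1..n+1}. f n l)" for n
  have g0: "0 \<le> g n" for n
    unfolding g_def using \<Omega>0 f by (intro mult_nonneg_nonneg sum_nonneg) auto
  have g\<Omega>: "g n \<le> \<Omega> n" for n
  proof -
    have "(\<Sum>l\<in>{1..n+1}. f n l) \<le> real (n+1)"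
      using sum_bounded_above[of "{1..n+1}" "f n" 1] f by simp
    then have "g n \<le> \<Omega> n / real (n+1) * real (n+1)"
      unfolding g_def using \<Omega>0 by (intro mult_left_mono) auto
    then show ?thesis by simp
  qed
  have "summable \<Omega>" using \<Omega>1 by (rule sums_summable)
  then have "summable g" by (rule summable_comparison_test[rotated]) (use g0 g\<Omega> in auto)
  moreover have "suminf g \<le> suminf \<Omega>"
    using \<open>summable g\<close> \<open>summable \<Omega>\<close> g\<Omega> by (intro suminf_le) auto
  ultimately show "summable (\<lambda>n. \<Omega> n / real (n+1) * (\<Sum>l\<in>{1..n+1}. f n l))"
    "0 \<le> (\<Sum>n. \<Omega> n / real (n+1) * (\<Sum>l\<in>{1..n+1}. f n l))"
    "(\<Sum>n. \<Omega> n / real (n+1) * (\<Sum>l\<in>{1..n+1}. f n l)) \<le> 1"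
    using g0 sums_unique[OF \<Omega>1] unfolding g_def[symmetric] by (auto intro: suminf_nonneg)
qed

lemma round_avg_affine_ge:
  fixes \<Omega> :: "nat \<Rightarrow> real" and f g :: "nat \<Rightarrow> nat \<Rightarrow> real"
  assumes \<Omega>0: "\<forall>n. \<Omega> n \<ge> 0" and \<Omega>1: "\<Omega> sums 1" and N: "(\<lambda>n. real n * \<Omega> n) sums N"
    and f: "\<And>n l. l \<in> {1..n+1} \<Longrightarrow> 0 \<le> f n l \<and> f n l \<le> 1"
    and g: "\<And>n l. l \<in> {1..n+1} \<Longrightarrow> 0 \<le> g n l \<and> g n l \<le> 1"
    and fg: "\<And>n l. l \<in> {1..n+1} \<Longrightarrow> a * f n l - b - C * real n \<le> g n l"
  shows "a * (\<Sum>n. \<Omega> n / real (n+1) * (\<Sum>l\<in>{1..n+1}. f n l)) - b - C * N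
    \<le> (\<Sum>n. \<Omega> n / real (n+1) * (\<Sum>l\<in>{1..n+1}. g n l))"
proof (rule sums_le)
  let ?F = "\<lambda>n. \<Omega> n / real (n+1) * (\<Sum>l\<in>{1..n+1}. f n l)"
  let ?G = "\<lambda>n. \<Omega> n / real (n+1) * (\<Sum>l\<in>{1..n+1}. g n l)"
  have "(\<lambda>n. a * ?F n) sums (a * (\<Sum>n. ?F n))"
    using summable_sums[OF round_avg_bounds(1)[OF \<Omega>0 \<Omega>1 f]] by (rule sums_mult)
  moreover have "(\<lambda>n. b * \<Omega> n) sums b" using sums_mult[OF \<Omega>1, of b] by simp
  ultimately show "(\<lambda>n. a * ?F n - b * \<Omega> n - C * (real n * \<Omega> n)) sums
      (a * (\<Sum>n. ?F n) - b - C * N)"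
    using sums_mult[OF N, of C] by (intro sums_diff)
  show "?G sums (\<Sum>n. ?G n)" using round_avg_bounds(1)[OF \<Omega>0 \<Omega>1 g] by (rule summable_sums)
  fix n
  define S K where "S = (\<Sum>l\<in>{1..n+1}. f n l)" and "K = b + C * real n"
  have "a * S - real (n+1) * K = (\<Sum>l\<in>{1..n+1}. a * f n l - K)"
    unfolding S_def sum_subtractf sum_distrib_left by simp
  also have "\<dots> \<le> (\<Sum>l\<in>{1..n+1}. g n l)"
    using fg by (intro sum_mono) (simp add: K_def algebra_simps)
  finally have "\<Omega> n / real (n+1) * (a * S - real (n+1) * K) \<le> ?G n"
    using \<Omega>0 by (intro mult_left_mono) auto
  moreover have "\<Omega> n / real (n+1) * (a * S - real (n+1) * K) =
      a * (\<Omega> n / real (n+1) * S) - b * \<Omega> n - C * (real n * \<Omega> n)"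
    by (simp add: K_def field_simps)
  ultimately show "a * ?F n - b * \<Omega> n - C * (real n * \<Omega> n) \<le> ?G n"
    by (simp add: S_def)
qed

lemma accept_prob_phase_attack:
  assumes k: "k \<ge> 1" and l: "l \<in> {1..n+1}"
    and T: "\<forall>i\<in>{1..n+1}. is_unitary (2^k) (T i)" and x: "\<forall>i\<in>{1..n+1}. is_unit_vec (2^k) (x i)"
    and \<mu>: "effect ((2^k)^n) \<mu>" and c: "0 \<le> c" "c \<le> 1" and c\<alpha>: "cos \<alpha> = 2*c^2 - 1"
  shows "0 \<le> accept_prob \<mu> T x n l" "accept_prob \<mu> T x n l \<le> 1"
    and "0 \<le> accept_prob \<mu> (\<lambda>i. attacked k before \<alpha> (T i)) x n l"
      "accept_prob \<mu> (\<lambda>i. attacked k before \<alpha> (T i)) x n l \<le> 1"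
    and "4 * accept_prob \<mu> T x n l - 3 - 8/3 * (1 - c) * real n
      \<le> accept_prob \<mu> (\<lambda>i. attacked k before \<alpha> (T i)) x n l"
proof -
  define T' where "T' i = attacked k before \<alpha> (T i)" for i
  have "T i \<in> carrier_mat (2^k) (2^k) \<and> T' i \<in> carrier_mat (2^k) (2^k) \<and> x i \<in> carrier_vec (2^k) \<and>
      cinner (T i *\<^sub>v x i) (T i *\<^sub>v x i) = 1 \<and> cinner (T' i *\<^sub>v x i) (T' i *\<^sub>v x i) = 1 \<and>
      c \<le> cmod (cinner (T i *\<^sub>v x i) (T' i *\<^sub>v x i))" if i: "i \<in> {1..n+1}" for i
  proof -
    have Ti: "is_unitary (2^k) (T i)" and xi: "is_unit_vec (2^k) (x i)" using T x i by auto
    then have "T i \<in> carrier_mat (2^k) (2^k)" "x i \<in> carrier_vec (2^k)" "cinner (x i) (x i) = 1"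
      by (auto simp: is_unitary_def is_unit_vec_def)
    then show ?thesis
      using attacked_test_output[OF k Ti xi c(1) c\<alpha>] is_unitary_cinner[OF Ti] by (simp add: T'_def)
  qed
  then have Tc: "\<forall>i\<in>{1..n+1}. T i \<in> carrier_mat (2^k) (2^k)"
    and T'c: "\<forall>i\<in>{1..n+1}. T' i \<in> carrier_mat (2^k) (2^k)"
    and xc: "\<forall>i\<in>{1..n+1}. x i \<in> carrier_vec (2^k)"
    and unit: "\<forall>i\<in>{1..n+1}. cinner (T i *\<^sub>v x i) (T i *\<^sub>v x i) = 1"
    and unit': "\<forall>i\<in>{1..n+1}. cinner (T' i *\<^sub>v x i) (T' i *\<^sub>v x i) = 1"
    and overlap: "\<forall>i\<in>{1..n+1}. c \<le> cmod (cinner (T i *\<^sub>v x i) (T' i *\<^sub>v x i))"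
    by blast+
  show "0 \<le> accept_prob \<mu> T x n l" "accept_prob \<mu> T x n l \<le> 1"
    using accept_prob_bounds[OF l Tc xc unit \<mu>] by simp_all
  show "0 \<le> accept_prob \<mu> (\<lambda>i. attacked k before \<alpha> (T i)) x n l"
    "accept_prob \<mu> (\<lambda>i. attacked k before \<alpha> (T i)) x n l \<le> 1"
    using accept_prob_bounds[OF l T'c xc unit' \<mu>] by (simp_all add: T'_def[abs_def])
  show "4 * accept_prob \<mu> T x n l - 3 - 8/3 * (1 - c) * real n
      \<le> accept_prob \<mu> (\<lambda>i. attacked k before \<alpha> (T i)) x n l"
    using accept_prob_perturb_ge[OF l Tc T'c xc unit unit' overlap c \<mu>]
    by (simp add: T'_def[abs_def] mult_ac)
qed

lemma avg_accept_phase_attack: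
  fixes \<Omega> :: "nat \<Rightarrow> real"
  assumes k: "k \<ge> 1" and \<Omega>0: "\<forall>n. \<Omega> n \<ge> 0" and \<Omega>1: "\<Omega> sums 1"
    and N: "(\<lambda>n. real n * \<Omega> n) sums N"
    and T: "\<forall>n. \<forall>i\<in>{1..n+1}. is_unitary (2^k) (T n i)"
    and \<chi>: "\<forall>n. \<forall>i\<in>{1..n+1}. is_unit_vec (2^k) (\<chi> n i)"
    and \<mu>: "\<forall>n. effect ((2^k)^n) (\<mu> n)"
    and c: "0 \<le> c" "c \<le> 1" and c\<alpha>: "cos \<alpha> = 2*c^2 - 1"
  shows "0 \<le> avg_accept \<Omega> \<mu> T \<chi>" "avg_accept \<Omega> \<mu> T \<chi> \<le> 1"
    and "0 \<le> avg_accept \<Omega> \<mu> (\<lambda>n i. attacked k before \<alpha> (T n i)) \<chi>"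
      "avg_accept \<Omega> \<mu> (\<lambda>n i. attacked k before \<alpha> (T n i)) \<chi> \<le> 1"
    and "4 * avg_accept \<Omega> \<mu> T \<chi> - 3 - 8/3 * (1 - c) * N
      \<le> avg_accept \<Omega> \<mu> (\<lambda>n i. attacked k before \<alpha> (T n i)) \<chi>"
proof -
  define fH fD where "fH n l = accept_prob (\<mu> n) (T n) (\<chi> n) n l"
    and "fD n l = accept_prob (\<mu> n) (\<lambda>i. attacked k before \<alpha> (T n i)) (\<chi> n) n l" for n l
  note honest = accept_prob_phase_attack(1,2)[OF k _ spec[OF T] spec[OF \<chi>] spec[OF \<mu>] c c\<alpha>,
      folded fH_def]
  note attacked = accept_prob_phase_attack(3-5)[where before = before,
      OF k _ spec[OF T] spec[OF \<chi>] spec[OF \<mu>] c c\<alpha>, folded fH_def fD_def]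
  have "avg_accept \<Omega> \<mu> T \<chi> = (\<Sum>n. \<Omega> n / real (n+1) * (\<Sum>l\<in>{1..n+1}. fH n l))"
    and "avg_accept \<Omega> \<mu> (\<lambda>n i. attacked k before \<alpha> (T n i)) \<chi>
      = (\<Sum>n. \<Omega> n / real (n+1) * (\<Sum>l\<in>{1..n+1}. fD n l))"
    by (simp_all add: avg_accept_def fH_def fD_def)
  then show "0 \<le> avg_accept \<Omega> \<mu> T \<chi>" "avg_accept \<Omega> \<mu> T \<chi> \<le> 1"
    "0 \<le> avg_accept \<Omega> \<mu> (\<lambda>n i. attacked k before \<alpha> (T n i)) \<chi>"
    "avg_accept \<Omega> \<mu> (\<lambda>n i. attacked k before \<alpha> (T n i)) \<chi> \<le> 1"
    "4 * avg_accept \<Omega> \<mu> T \<chi> - 3 - 8/3 * (1 - c) * N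
      \<le> avg_accept \<Omega> \<mu> (\<lambda>n i. attacked k before \<alpha> (T n i)) \<chi>"
    using round_avg_bounds(2,3)[OF \<Omega>0 \<Omega>1, of fH] round_avg_bounds(2,3)[OF \<Omega>0 \<Omega>1, of fD]
      round_avg_affine_ge[OF \<Omega>0 \<Omega>1 N, of fH fD 4 3 "8/3 * (1 - c)"] honest attacked
    by (simp_all add: mult.assoc)
qed

lemma fidelity_honest_plus:
  "0 \<le> q \<Longrightarrow> q \<le> 1 \<Longrightarrow> fidelity (mix_bot k q (plus_k k)) (ext_state k (plus_k k)) = q"
  unfolding plus_k_eq_ketbra by (rule fidelity_mix_bot_ext_state[OF plus_vec_carrier cinner_plus_vec])

lemma fidelity_phase_attack_le:
  assumes k: "k \<ge> 1" and q: "0 \<le> q" "q \<le> 1" and p: "0 \<le> p" "p \<le> 1"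
    and c\<alpha>: "cos \<alpha> = 2*c^2 - 1"
  shows "fidelity (mix_bot k q (plus_k_alpha k \<alpha>)) (mix_bot k p (plus_k k)) \<le> 1 - q * (1 - c^2)"
proof -
  let ?s = "cmod (cinner (plus_alpha_vec k \<alpha>) (plus_vec k))"
  have "fidelity (mix_bot k q (plus_k_alpha k \<alpha>)) (mix_bot k p (plus_k k)) =
      (sqrt (q*p) * ?s + sqrt ((1-q)*(1-p)))\<^sup>2"
    unfolding plus_k_eq_ketbra plus_k_alpha_eq_ketbra
    by (rule fidelity_mix_bot[OF plus_vec_carrier plus_alpha_vec_carrier[OF k]
          cinner_plus_alpha_vec_self q p])
  also have "\<dots> \<le> q * ?s\<^sup>2 + (1 - q)"
    using q p by (intro sqrt_convex_comb_square_le) auto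
  also have "?s\<^sup>2 = c\<^sup>2"
    using cmod_cinner_plus_alpha_vec_plus_vec[OF k, of \<alpha>] by (simp add: c\<alpha>)
  finally show ?thesis by (simp add: algebra_simps)
qed

lemma cut_and_choose_tradeoff:
  fixes N \<epsilon>H \<epsilon>D pH pD :: real
  assumes N: "N \<ge> 1" and \<epsilon>: "\<epsilon>H \<ge> 0" "\<epsilon>D \<ge> 0"
    and pH: "1 - \<epsilon>H \<le> pH" and pD: "4 * pH - 3 - 8/3 * (1 - c) * N \<le> pD"
    and \<epsilon>D: "pD * (1 - c^2) \<le> \<epsilon>D" and c: "c = 1 - 3 / (20 * N)"
  shows "1 / (7 * N) \<le> \<epsilon>H + \<epsilon>D"
proof (cases "1 / (7 * N) \<le> \<epsilon>H")
  case True
  then show ?thesis using \<epsilon> by simp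
next
  case False
  define y where "y = 1 / N"
  have y: "0 < y" "y \<le> 1" using N by (auto simp: y_def)
  have \<epsilon>Hy: "7 * \<epsilon>H < y" using False N by (simp add: y_def field_simps)
  have "8/3 * (1 - c) * N = 2/5" unfolding c using N by (simp add: field_simps)
  then have pD': "3/5 - 4 * \<epsilon>H \<le> pD" using pD pH by simp
  have cy: "c = 1 - 3/20 * y" unfolding c y_def by simp
  have "1 - c^2 = 3/20 * y * (2 - 3/20 * y)" unfolding cy by (simp add: power2_eq_square algebra_simps)
  also have "\<dots> \<ge> 3/20 * y * (37/20)" using y by (intro mult_left_mono) auto
  finally have "(3/5 - 4 * \<epsilon>H) * (3/20 * y * (37/20)) \<le> pD * (1 - c^2)"
    using pD' \<epsilon>Hy y by (intro mult_mono) auto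
  moreover define z where "z = \<epsilon>H * y"
  moreover have "(3/5 - 4 * \<epsilon>H) * (3/20 * y * (37/20)) = 333/2000 * y - 111/100 * z"
    by (simp add: z_def field_simps)
  ultimately have "333/2000 * y - 111/100 * z \<le> \<epsilon>D" using \<epsilon>D by linarith
  moreover have "z \<le> \<epsilon>H" using \<epsilon> y by (simp add: z_def mult_left_le)
  ultimately have "y \<le> 7 * (\<epsilon>H + \<epsilon>D)" using \<epsilon>Hy \<epsilon> by argo
  then show ?thesis by (simp add: y_def field_simps)
qed

theorem theorem1:
  fixes k :: nat and \<Omega> :: "nat \<Rightarrow> real" and N :: real
    and T :: "nat \<Rightarrow> nat \<Rightarrow> complex mat" and \<chi> :: "nat \<Rightarrow> nat \<Rightarrow> complex vec"
    and \<mu> :: "nat \<Rightarrow> complex mat" and before :: bool and \<epsilon>H \<epsilon>D :: real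
  assumes k: "k \<ge> 1"
    and \<Omega>_nonneg: "\<forall>n. \<Omega> n \<ge> 0"
    and \<Omega>_sum: "\<Omega> sums 1"
    and N_mean: "(\<lambda>n. real n * \<Omega> n) sums N"
    and N_ge: "N \<ge> 1"
    and T_unitary: "\<forall>n. \<forall>i\<in>{1..n+1}. is_unitary (2^k) (T n i)"
    and \<chi>_unit: "\<forall>n. \<forall>i\<in>{1..n+1}. is_unit_vec (2^k) (\<chi> n i)"
    and \<mu>_effect: "\<forall>n. effect ((2^k)^n) (\<mu> n)"
    and eps_nonneg: "\<epsilon>H \<ge> 0" "\<epsilon>D \<ge> 0"
    and correct: "fidelity (mix_bot k (avg_accept \<Omega> \<mu> T \<chi>) (plus_k k))
                           (ext_state k (plus_k k)) \<ge> 1 - \<epsilon>H"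
    and secure: "\<forall>\<alpha>::real. \<exists>p\<in>{0..1::real}.
         fidelity (mix_bot k (avg_accept \<Omega> \<mu> (\<lambda>n i. attacked k before \<alpha> (T n i)) \<chi>) (plus_k_alpha k \<alpha>))
                  (mix_bot k p (plus_k k)) \<ge> 1 - \<epsilon>D"
  shows "\<epsilon>H + \<epsilon>D \<ge> 1 / (7 * N)"
proof -
  define c where "c = 1 - 3 / (20 * N)"
  have c: "0 \<le> c" "c \<le> 1" using N_ge by (auto simp: c_def field_simps)
  define \<alpha> where "\<alpha> = 2 * arccos c"
  have c\<alpha>: "cos \<alpha> = 2 * c^2 - 1" unfolding \<alpha>_def cos_double_cos using c by (simp add: cos_arccos)
  define pH pD where "pH = avg_accept \<Omega> \<mu> T \<chi>"
    and "pD = avg_accept \<Omega> \<mu> (\<lambda>n i. attacked k before \<alpha> (T n i)) \<chi>"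
  have avg: "0 \<le> pH" "pH \<le> 1" "0 \<le> pD" "pD \<le> 1" "4 * pH - 3 - 8/3 * (1 - c) * N \<le> pD"
    unfolding pH_def pD_def
    by (rule avg_accept_phase_attack[OF k \<Omega>_nonneg \<Omega>_sum N_mean T_unitary \<chi>_unit \<mu>_effect c c\<alpha>])+
  have "1 - \<epsilon>H \<le> pH" using correct fidelity_honest_plus[OF avg(1,2)] by (simp add: pH_def)
  moreover obtain p where "0 \<le> p" "p \<le> 1"
    and "1 - \<epsilon>D \<le> fidelity (mix_bot k pD (plus_k_alpha k \<alpha>)) (mix_bot k p (plus_k k))"
    using secure[rule_format, of \<alpha>] unfolding pD_def by auto
  then have "pD * (1 - c^2) \<le> \<epsilon>D" using fidelity_phase_attack_le[OF k avg(3,4) _ _ c\<alpha>] by fastforce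
  ultimately show ?thesis
    using cut_and_choose_tradeoff[OF N_ge eps_nonneg _ avg(5) _ c_def] by simp
qed

end
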